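(* Let $G$ be a finite abelian group with a free Brauer action on the Brauer graph $(\Gamma,\mathfrak o,m)$. Let $(\overline\Gamma,\overline{\mathfrak o},\overline m)$ be the Brauer orbit graph, let $W:\mathcal Z_{\overline\Gamma}\to G$ be the successor weighting associated to the action (which is a Brauer weighting), and let $(\overline\Gamma_W,\overline{\mathfrak o}_W,\overline m_W)$ be the Brauer covering graph of $(\overline\Gamma,\overline{\mathfrak o},\overline m)$ associated to $W$. Then $(\Gamma,\mathfrak o,m)$ and $(\overline\Gamma_W,\overline{\mathfrak o}_W,\overline m_W)$ are isomorphic as Brauer graphs. Moreover, if $(\Gamma,\mathfrak o,m,q)$ is a quantized Brauer graph on which the action of $G$ is a free Brauer action, with quantized Brauer orbit graph $(\overline\Gamma,\overline{\mathfrak o},\overline m,\overline q)$, then $(\Gamma,\mathfrak o,m,q)$ and $(\overline\Gamma_W,\overline{\mathfrak o}_W,\overline m_W,\overline q_W)$ are isomorphic as quantized Brauer graphs; in particular the Brauer graph algebras $A_\Gamma$ and $A_{\overline\Gamma_W}$ are isomorphic.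
   Context: Brauer graphs. A Brauer graph $(\Gamma,\mathfrak o,m)$ is a finite connected graph $\Gamma$ (loops and multiple edges allowed) with vertex set $\Gamma_0$, edge set $\Gamma_1$ and at least one edge, together with a multiplicity function $m:\Gamma_0\to\mathbb Z_{\ge 1}$ and, for each vertex $\mu$, a cyclic ordering $\mathfrak o$ of the edges incident with $\mu$. A loop at $\mu$ occurs twice in the cyclic ordering at $\mu$; its two occurrences are regarded as two distinct elements of $\Gamma_1$ (each with its own successor). Edge $j$ is the successor of edge $i$ at $\mu$ if $j$ immediately follows $i$ in the cyclic ordering at $\mu$. The valency $\operatorname{val}(\mu)$ is the number of edges incident with $\mu$, loops counted twice; if $\operatorname{val}(\mu)=1$ the unique edge at $\mu$ is its own successor. For $i$ incident with $\mu$, the successor sequence of $i$ at $\mu$ is $i=i_1,i_2,\dots,i_{\operatorname{val}(\mu)}$, where $i_{r+1}$ is the successor of $i_r$ at $\mu$ (and $i_{\operatorname{val}(\mu)+1}=i_1$). An edge $i$ is truncated at its endpoint $\mu$ if $\operatorname{val}(\mu)=1$ and $m(\mu)=1$. Brauer graph algebras. Fix a field $K$. A quantized Brauer graph $(\Gamma,\mathfrak o,m,q)$ is a Brauer graph with a function $q:\mathcal X_\Gamma\to K\setminus\{0\}$, $(i,\mu)\mapsto q_{i,\mu}$, where $\mathcal X_\Gamma$ is the set of pairs $(i,\mu)$ with $\mu$ an endpoint of $i$ and $i$ not truncated at either of its endpoints. Its Brauer graph algebra is $A_\Gamma=KQ_\Gamma/I_\Gamma$ (paths written left to right), defined as follows.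 If $\Gamma$ is a single non-loop edge whose two endpoints have multiplicity $1$, then $Q_\Gamma$ has one vertex and one loop $x$, and $I_\Gamma=(x^2)$. Otherwise $Q_\Gamma$ has a vertex $v_i$ for each $i\in\Gamma_1$ and an arrow $v_i\to v_j$ for each vertex $\mu$ and each pair $(i,j)$ with $j$ the successor of $i$ at $\mu$ and $i$ not truncated at $\mu$. For $i$ incident with $\mu$ and not truncated at $\mu$, with successor sequence $i_1,\dots,i_{\operatorname{val}(\mu)}$, let $C_{i,\mu}=a_1a_2\cdots a_{\operatorname{val}(\mu)}$ where $a_r$ is the arrow corresponding to $i_{r+1}$ being the successor of $i_r$ at $\mu$. The ideal $I_\Gamma$ is generated by: (type one) $q_{i,\mu}C_{i,\mu}^{m(\mu)}-q_{i,\nu}C_{i,\nu}^{m(\nu)}$ for each edge $i$ with endpoints $\mu,\nu$ that is not truncated at either endpoint; (type two) $C_{i,\nu}^{m(\nu)}b_1$ whenever $i$ is truncated at its endpoint $\mu$, $\nu$ is its other endpoint and $C_{i,\nu}=b_1\cdots b_{\operatorname{val}(\nu)}$; (type three) all paths $ab$ of length two in $Q_\Gamma$ that are not subpaths of any $C_{i,\mu}$. Isomorphisms. An isomorphism of Brauer graphs $(\Gamma,\mathfrak o,m)\to(\Gamma',\mathfrak o',m')$ is a graph isomorphism $\varphi$ such that if $j$ is the successor of $i$ at $\mu$ then $\varphi(j)$ is the successor of $\varphi(i)$ at $\varphi(\mu)$, and $m'(\varphi(\mu))=m(\mu)$ for all $\mu$; it induces an isomorphism $KQ_\Gamma\to KQ_{\Gamma'}$.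 It is an isomorphism of quantized Brauer graphs $(\Gamma,\mathfrak o,m,q)\to(\Gamma',\mathfrak o',m',q')$ if this induced isomorphism maps $I_\Gamma$ onto $I_{\Gamma'}$. Brauer actions. Let $G$ be a finite abelian group. A Brauer action of $G$ on $(\Gamma,\mathfrak o,m)$ is a faithful action $x\mapsto x^g$ of $G$ on the graph $\Gamma$ (on vertices and edges, compatible with incidence) such that for all $g\in G$: if $j$ is the successor of $i$ at $\mu$ then $j^g$ is the successor of $i^g$ at $\mu^g$, and $m(\mu^g)=m(\mu)$. It is a free Brauer action if $G$ acts freely on $\Gamma_1$. It is a Brauer action on the quantized Brauer graph $(\Gamma,\mathfrak o,m,q)$ if moreover $q_{i,\mu}/q_{i,\nu}=q_{i^g,\mu^g}/q_{i^g,\nu^g}$ for all $g\in G$ and every edge $i$ with endpoints $\mu,\nu$ not truncated at either endpoint. For a free Brauer action, the Brauer orbit graph $(\overline\Gamma,\overline{\mathfrak o},\overline m)$ has as vertices the $G$-orbits $\bar\mu$ of vertices and as edges the $G$-orbits $\bar i$ of edges, $\bar i$ being incident with $\bar\mu$ when $i$ is incident with $\mu$; its cyclic ordering is given by: $\bar j$ is the successor of $\bar i$ at $\bar\mu$ whenever $j$ is the successor of $i$ at $\mu$; and $\overline m(\bar\mu)=\operatorname{val}(\mu)m(\mu)/\operatorname{val}(\bar\mu)$. For the quantized Brauer orbit graph $(\overline\Gamma,\overline{\mathfrak o},\overline m,\overline q)$, fix a function $\mathcal E_1$ assigning to each edge $i$ not truncated at either endpoint one of its endpoints, such that $\mathcal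 E_1(i^g)=\mathcal E_1(i)^g$ for all $g\in G$ (such a choice exists), and set $\overline q_{\bar i,\bar\mu}=q_{i,\mu}/q_{i,\mathcal E_1(i)}$. Successor weightings. For a Brauer graph $(\Delta,\mathfrak o,m)$ and $\mu\in\Delta_0$ let $\mathcal Z_\mu$ be the set of pairs $(i,j)$ of edges with $j$ the successor of $i$ at $\mu$, and $\mathcal Z_\Delta=\bigsqcup_{\mu\in\Delta_0}\mathcal Z_\mu$ (disjoint union). A successor weighting is a function $W:\mathcal Z_\Delta\to G$. Put $\omega_\mu=\prod_{(i,j)\in\mathcal Z_\mu}W(i,j)$, let $\operatorname{ord}(\mu)$ be the order of $\omega_\mu$ in $G$, and $H_\mu=\langle\omega_\mu\rangle$. $W$ is a Brauer weighting if $\operatorname{ord}(\mu)$ divides $m(\mu)$ for all $\mu\in\Delta_0$. For each $\mu$, $\sim$ is the equivalence relation on the set of pairs $(i,H_\mu g)$ ($i$ incident with $\mu$, $g\in G$) generated by $(i,H_\mu g)\sim(j,H_\mu gW(i,j))$ whenever $j$ is the successor of $i$ at $\mu$; the class of $(i,H_\mu g)$ is $[i,H_\mu g]$, and $\mathcal D_\mu$ is the set of classes. Brauer covering graph. The graph $\Delta_W$ has vertices $\mu_d$ ($\mu\in\Delta_0$, $d\in\mathcal D_\mu$) and edges $i_g$ ($i\in\Delta_1$, $g\in G$). If $i$ has endpoints $\mu$ and $\nu$, then $i_g$ has endpoints $\mu_{[i,H_\mu g]}$ and $\nu_{[i,H_\nu g]}$; if $i$ is a loop at $\mu$ with its two occurrences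 $i,\hat i$, then $i_g$ has endpoints $\mu_{[i,H_\mu g]}$ and $\mu_{[\hat i,H_\mu g]}$. The cyclic ordering $\mathfrak o_W$ is defined by: if $j$ is the successor of $i$ at $\mu$, then $j_{gW(i,j)}$ is the successor of $i_g$ at $\mu_{[i,H_\mu g]}$. For a Brauer weighting, $m_W(\mu_d)=m(\mu)/\operatorname{ord}(\mu)$; $(\Delta_W,\mathfrak o_W,m_W)$ is the Brauer covering graph. Given a quantizing function $q$ on $\Delta$, $q_W(i_g,\mu_d)=q_{i,\mu}$, and $(\Delta_W,\mathfrak o_W,m_W,q_W)$ is the quantized Brauer covering graph. Successor weighting associated to a free Brauer action. For each edge $\bar i$ of $\overline\Gamma$ fix a representative $i_*\in\bar i$, and for each endpoint $\bar\mu$ of $\bar i$ fix $\mu_*\in\bar\mu$ incident with $i_*$. For $(\bar i,\bar j)\in\mathcal Z_{\bar\mu}$, there is a unique edge $l\in\bar j$ that is the successor of $i_*$ at $\mu_*$, and $l=(j_* )^g$ for a unique $g\in G$; set $W(\bar i,\bar j)=g$. This defines $W:\mathcal Z_{\overline\Gamma}\to G$. *)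

theory Defs
  imports Main
begin

text \<open>Hs is the set of edge occurrences
  (half-edges): every edge i with endpoints mu, nu has one occurrence at mu and one at nu
  (for a loop both occurrences sit at the same vertex, as in the paper).
  ends h is the vertex of the occurrence h, opp h the other occurrence of the same edge,
  succ h the occurrence at the same vertex of the successor edge (cyclic ordering),
  mult the multiplicity function.\<close>

record ('v, 'h) bgraph =
  Vs   :: "'v set"
  Hs   :: "'h set"
  ends :: "'h \<Rightarrow> 'v"
  opp  :: "'h \<Rightarrow> 'h"
  succ :: "'h \<Rightarrow> 'h"
  mult :: "'v \<Rightarrow> nat"

definition atv :: "('v, 'h, 'z) bgraph_scheme \<Rightarrow> 'v \<Rightarrow> 'h set" where
  "atv \<Gamma> \<mu> = {h \<in> Hs \<Gamma>. ends \<Gamma> h = \<mu>}"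

text \<open>valency: number of incident edges, loops counted twice\<close>
definition val :: "('v, 'h, 'z) bgraph_scheme \<Rightarrow> 'v \<Rightarrow> nat" where
  "val \<Gamma> \<mu> = card (atv \<Gamma> \<mu>)"

definition edge :: "('v, 'h, 'z) bgraph_scheme \<Rightarrow> 'h \<Rightarrow> 'h set" where
  "edge \<Gamma> h = {h, opp \<Gamma> h}"

definition Edges :: "('v, 'h, 'z) bgraph_scheme \<Rightarrow> 'h set set" where
  "Edges \<Gamma> = edge \<Gamma> ` Hs \<Gamma>"

definition is_bgraph :: "('v, 'h, 'z) bgraph_scheme \<Rightarrow> bool" where
  "is_bgraph \<Gamma> \<longleftrightarrow>
     finite (Vs \<Gamma>) \<and> finite (Hs \<Gamma>) \<and> Hs \<Gamma> \<noteq> {} \<and>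
     (\<forall>h\<in>Hs \<Gamma>. ends \<Gamma> h \<in> Vs \<Gamma> \<and> opp \<Gamma> h \<in> Hs \<Gamma> \<and> opp \<Gamma> h \<noteq> h \<and>
                 opp \<Gamma> (opp \<Gamma> h) = h \<and> succ \<Gamma> h \<in> Hs \<Gamma> \<and>
                 ends \<Gamma> (succ \<Gamma> h) = ends \<Gamma> h) \<and>
     inj_on (succ \<Gamma>) (Hs \<Gamma>) \<and>
     \<comment> \<open>the successor map is a single cycle on the occurrences at each vertex\<close>
     (\<forall>h\<in>Hs \<Gamma>. \<forall>h'\<in>atv \<Gamma> (ends \<Gamma> h). \<exists>n. (succ \<Gamma> ^^ n) h = h') \<and>
     \<comment> \<open>connectedness\<close>
     (\<forall>\<mu>\<in>Vs \<Gamma>. \<forall>\<nu>\<in>Vs \<Gamma>.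
        (\<mu>, \<nu>) \<in> {(ends \<Gamma> h, ends \<Gamma> (opp \<Gamma> h)) | h. h \<in> Hs \<Gamma>}\<^sup>*) \<and>
     (\<forall>\<mu>\<in>Vs \<Gamma>. mult \<Gamma> \<mu> \<ge> 1)"

text \<open>the edge of h is truncated at the endpoint (ends h)\<close>
definition truncated :: "('v, 'h, 'z) bgraph_scheme \<Rightarrow> 'h \<Rightarrow> bool" where
  "truncated \<Gamma> h \<longleftrightarrow> val \<Gamma> (ends \<Gamma> h) = 1 \<and> mult \<Gamma> (ends \<Gamma> h) = 1"

definition nontrunc_edge :: "('v, 'h, 'z) bgraph_scheme \<Rightarrow> 'h \<Rightarrow> bool" where
  "nontrunc_edge \<Gamma> h \<longleftrightarrow> \<not> truncated \<Gamma> h \<and> \<not> truncated \<Gamma> (opp \<Gamma> h)"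

text \<open>quantized Brauer graph: q is nonzero on X_Gamma (q indexed by occurrences)\<close>
definition is_qbgraph :: "('v, 'h, 'z) bgraph_scheme \<Rightarrow> ('h \<Rightarrow> 'k::field) \<Rightarrow> bool" where
  "is_qbgraph \<Gamma> q \<longleftrightarrow> is_bgraph \<Gamma> \<and> (\<forall>h\<in>Hs \<Gamma>. nontrunc_edge \<Gamma> h \<longrightarrow> q h \<noteq> 0)"

definition bgiso :: "('v, 'h, 'z) bgraph_scheme \<Rightarrow> ('w, 'e, 'y) bgraph_scheme \<Rightarrow>
    ('v \<Rightarrow> 'w) \<Rightarrow> ('h \<Rightarrow> 'e) \<Rightarrow> bool" where
  "bgiso \<Gamma> \<Gamma>' fv fh \<longleftrightarrow>
     bij_betw fv (Vs \<Gamma>) (Vs \<Gamma>') \<and> bij_betw fh (Hs \<Gamma>) (Hs \<Gamma>') \<and>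
     (\<forall>h\<in>Hs \<Gamma>. ends \<Gamma>' (fh h) = fv (ends \<Gamma> h) \<and> opp \<Gamma>' (fh h) = fh (opp \<Gamma> h) \<and>
                 succ \<Gamma>' (fh h) = fh (succ \<Gamma> h)) \<and>
     (\<forall>\<mu>\<in>Vs \<Gamma>. mult \<Gamma>' (fv \<mu>) = mult \<Gamma> \<mu>)"

text \<open>Arrows of the quiver: Arr h is the arrow v_i -> v_j given by the occurrence h of i
  at mu whose successor is the occurrence succ h of j; X is the loop of the exceptional
  quiver of a single non-loop edge with both multiplicities 1.  Quiver vertices are the
  edges {h, opp h}.\<close>

datatype 'h arr = Arr 'h | X

definition special :: "('v, 'h, 'z) bgraph_scheme \<Rightarrow> bool" where
  "special \<Gamma> \<longleftrightarrow> (\<exists>h\<in>Hs \<Gamma>. Hs \<Gamma> = {h, opp \<Gamma> h} \<and> ends \<Gamma> h \<noteq> ends \<Gamma> (opp \<Gamma> h) \<and>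
                      mult \<Gamma> (ends \<Gamma> h) = 1 \<and> mult \<Gamma> (ends \<Gamma> (opp \<Gamma> h)) = 1)"

definition QV :: "('v, 'h, 'z) bgraph_scheme \<Rightarrow> 'h set set" where
  "QV \<Gamma> = Edges \<Gamma>"

definition QA :: "('v, 'h, 'z) bgraph_scheme \<Rightarrow> 'h arr set" where
  "QA \<Gamma> = (if special \<Gamma> then {X} else Arr ` {h \<in> Hs \<Gamma>. \<not> truncated \<Gamma> h})"

fun src :: "('v, 'h, 'z) bgraph_scheme \<Rightarrow> 'h arr \<Rightarrow> 'h set" where
  "src \<Gamma> (Arr h) = edge \<Gamma> h"
| "src \<Gamma> X = Hs \<Gamma>"

fun tgt :: "('v, 'h, 'z) bgraph_scheme \<Rightarrow> 'h arr \<Rightarrow> 'h set" where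
  "tgt \<Gamma> (Arr h) = edge \<Gamma> (succ \<Gamma> h)"
| "tgt \<Gamma> X = Hs \<Gamma>"

text \<open>paths are written left to right: (start vertex, list of arrows)\<close>
fun pathfrom :: "('v, 'h, 'z) bgraph_scheme \<Rightarrow> 'h set \<Rightarrow> 'h arr list \<Rightarrow> bool" where
  "pathfrom \<Gamma> v [] = True"
| "pathfrom \<Gamma> v (a # as) = (a \<in> QA \<Gamma> \<and> src \<Gamma> a = v \<and> pathfrom \<Gamma> (tgt \<Gamma> a) as)"

definition is_path :: "('v, 'h, 'z) bgraph_scheme \<Rightarrow> 'h set \<times> 'h arr list \<Rightarrow> bool" where
  "is_path \<Gamma> p \<longleftrightarrow> fst p \<in> QV \<Gamma> \<and> pathfrom \<Gamma> (fst p) (snd p)"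

definition pend :: "('v, 'h, 'z) bgraph_scheme \<Rightarrow> 'h set \<Rightarrow> 'h arr list \<Rightarrow> 'h set" where
  "pend \<Gamma> v as = foldl (\<lambda>_ a. tgt \<Gamma> a) v as"

text \<open>The path algebra KQ: finitely supported K-valued functions on the paths.\<close>
definition KQ :: "('v, 'h, 'z) bgraph_scheme \<Rightarrow> ('h set \<times> 'h arr list \<Rightarrow> 'k::field) set" where
  "KQ \<Gamma> = {f. finite {p. f p \<noteq> 0} \<and> (\<forall>p. f p \<noteq> 0 \<longrightarrow> is_path \<Gamma> p)}"

definition pmul :: "('v, 'h, 'z) bgraph_scheme \<Rightarrow> ('h set \<times> 'h arr list \<Rightarrow> 'k::field) \<Rightarrow>
    ('h set \<times> 'h arr list \<Rightarrow> 'k) \<Rightarrow> ('h set \<times> 'h arr list \<Rightarrow> 'k)" where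
  "pmul \<Gamma> f g = (\<lambda>(v, as). \<Sum>k\<in>{0..length as}.
       f (v, take k as) * g (pend \<Gamma> v (take k as), drop k as))"

definition basis :: "'h set \<times> 'h arr list \<Rightarrow> ('h set \<times> 'h arr list \<Rightarrow> 'k::field)" where
  "basis p = (\<lambda>p'. if p' = p then 1 else 0)"

inductive_set ideal_gen :: "('v, 'h, 'z) bgraph_scheme \<Rightarrow> ('h set \<times> 'h arr list \<Rightarrow> 'k::field) set
    \<Rightarrow> ('h set \<times> 'h arr list \<Rightarrow> 'k) set" for \<Gamma> S where
  gen: "s \<in> S \<Longrightarrow> s \<in> ideal_gen \<Gamma> S"
| zero: "(\<lambda>_. 0) \<in> ideal_gen \<Gamma> S"
| add: "x \<in> ideal_gen \<Gamma> S \<Longrightarrow> y \<in> ideal_gen \<Gamma> S \<Longrightarrow> (\<lambda>p. x p + y p) \<in> ideal_gen \<Gamma> S"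
| lmul: "x \<in> KQ \<Gamma> \<Longrightarrow> y \<in> ideal_gen \<Gamma> S \<Longrightarrow> pmul \<Gamma> x y \<in> ideal_gen \<Gamma> S"
| rmul: "x \<in> ideal_gen \<Gamma> S \<Longrightarrow> y \<in> KQ \<Gamma> \<Longrightarrow> pmul \<Gamma> x y \<in> ideal_gen \<Gamma> S"

text \<open>C_{i,mu} for the occurrence h of i at mu, and its m(mu)-th power\<close>
definition Cyc :: "('v, 'h, 'z) bgraph_scheme \<Rightarrow> 'h \<Rightarrow> 'h arr list" where
  "Cyc \<Gamma> h = map (\<lambda>r. Arr ((succ \<Gamma> ^^ r) h)) [0..<val \<Gamma> (ends \<Gamma> h)]"

definition CycPow :: "('v, 'h, 'z) bgraph_scheme \<Rightarrow> 'h \<Rightarrow> 'h arr list" where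
  "CycPow \<Gamma> h = concat (replicate (mult \<Gamma> (ends \<Gamma> h)) (Cyc \<Gamma> h))"

definition rels1 :: "('v, 'h, 'z) bgraph_scheme \<Rightarrow> ('h \<Rightarrow> 'k::field) \<Rightarrow>
    ('h set \<times> 'h arr list \<Rightarrow> 'k) set" where
  "rels1 \<Gamma> q = {(\<lambda>p. q h * basis (edge \<Gamma> h, CycPow \<Gamma> h) p
                     - q (opp \<Gamma> h) * basis (edge \<Gamma> h, CycPow \<Gamma> (opp \<Gamma> h)) p)
                 | h. h \<in> Hs \<Gamma> \<and> nontrunc_edge \<Gamma> h}"

definition rels2 :: "('v, 'h, 'z) bgraph_scheme \<Rightarrow> ('h set \<times> 'h arr list \<Rightarrow> 'k::field) set" where
  "rels2 \<Gamma> = {basis (edge \<Gamma> h, CycPow \<Gamma> (opp \<Gamma> h) @ [Arr (opp \<Gamma> h)])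
                 | h. h \<in> Hs \<Gamma> \<and> truncated \<Gamma> h}"

definition rels3 :: "('v, 'h, 'z) bgraph_scheme \<Rightarrow> ('h set \<times> 'h arr list \<Rightarrow> 'k::field) set" where
  "rels3 \<Gamma> = {basis (src \<Gamma> a, [a, b]) | a b.
                 a \<in> QA \<Gamma> \<and> b \<in> QA \<Gamma> \<and> tgt \<Gamma> a = src \<Gamma> b \<and>
                 \<not> (\<exists>k\<in>Hs \<Gamma>. \<not> truncated \<Gamma> k \<and> (\<exists>xs ys. Cyc \<Gamma> k = xs @ [a, b] @ ys))}"

definition rels :: "('v, 'h, 'z) bgraph_scheme \<Rightarrow> ('h \<Rightarrow> 'k::field) \<Rightarrow>
    ('h set \<times> 'h arr list \<Rightarrow> 'k) set" where
  "rels \<Gamma> q = (if special \<Gamma> then {basis (Hs \<Gamma>, [X, X])}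
                else rels1 \<Gamma> q \<union> rels2 \<Gamma> \<union> rels3 \<Gamma>)"

text \<open>The ideal I_Gamma of the Brauer graph algebra A_Gamma = KQ_Gamma / I_Gamma.\<close>
definition IGamma :: "('v, 'h, 'z) bgraph_scheme \<Rightarrow> ('h \<Rightarrow> 'k::field) \<Rightarrow>
    ('h set \<times> 'h arr list \<Rightarrow> 'k) set" where
  "IGamma \<Gamma> q = ideal_gen \<Gamma> (rels \<Gamma> q)"

definition pathmap :: "('h \<Rightarrow> 'e) \<Rightarrow> 'h set \<times> 'h arr list \<Rightarrow> 'e set \<times> 'e arr list" where
  "pathmap fh p = (fh ` fst p, map (map_arr fh) (snd p))"

definition induced :: "('v, 'h, 'z) bgraph_scheme \<Rightarrow> ('w, 'e, 'y) bgraph_scheme \<Rightarrow> ('h \<Rightarrow> 'e) \<Rightarrow>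
    ('h set \<times> 'h arr list \<Rightarrow> 'k::field) \<Rightarrow> ('e set \<times> 'e arr list \<Rightarrow> 'k)" where
  "induced \<Gamma> \<Gamma>' fh f = (\<lambda>p'. if is_path \<Gamma>' p'
       then f (inv_into {p. is_path \<Gamma> p} (pathmap fh) p') else 0)"

definition qiso :: "('v, 'h, 'z) bgraph_scheme \<Rightarrow> ('h \<Rightarrow> 'k::field) \<Rightarrow>
    ('w, 'e, 'y) bgraph_scheme \<Rightarrow> ('e \<Rightarrow> 'k) \<Rightarrow> ('v \<Rightarrow> 'w) \<Rightarrow> ('h \<Rightarrow> 'e) \<Rightarrow> bool" where
  "qiso \<Gamma> q \<Gamma>' q' fv fh \<longleftrightarrow> bgiso \<Gamma> \<Gamma>' fv fh \<and>
     induced \<Gamma> \<Gamma>' fh ` IGamma \<Gamma> q = IGamma \<Gamma>' q'"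

definition brauer_action :: "('v, 'h, 'z) bgraph_scheme \<Rightarrow>
    ('g::{finite, ab_group_add} \<Rightarrow> 'v \<Rightarrow> 'v) \<Rightarrow> ('g \<Rightarrow> 'h \<Rightarrow> 'h) \<Rightarrow> bool" where
  "brauer_action \<Gamma> av ah \<longleftrightarrow>
     (\<forall>\<mu>\<in>Vs \<Gamma>. av 0 \<mu> = \<mu>) \<and> (\<forall>h\<in>Hs \<Gamma>. ah 0 h = h) \<and>
     (\<forall>g g'. \<forall>\<mu>\<in>Vs \<Gamma>. av (g + g') \<mu> = av g (av g' \<mu>)) \<and>
     (\<forall>g g'. \<forall>h\<in>Hs \<Gamma>. ah (g + g') h = ah g (ah g' h)) \<and>
     (\<forall>g. \<forall>\<mu>\<in>Vs \<Gamma>. av g \<mu> \<in> Vs \<Gamma> \<and> mult \<Gamma> (av g \<mu>) = mult \<Gamma> \<mu>) \<and>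
     (\<forall>g. \<forall>h\<in>Hs \<Gamma>. ah g h \<in> Hs \<Gamma> \<and> ends \<Gamma> (ah g h) = av g (ends \<Gamma> h) \<and>
                    opp \<Gamma> (ah g h) = ah g (opp \<Gamma> h) \<and> succ \<Gamma> (ah g h) = ah g (succ \<Gamma> h)) \<and>
     \<comment> \<open>faithful\<close>
     (\<forall>g. (\<forall>\<mu>\<in>Vs \<Gamma>. av g \<mu> = \<mu>) \<and> (\<forall>h\<in>Hs \<Gamma>. ah g h = h) \<longrightarrow> g = 0)"

definition free_brauer_action :: "('v, 'h, 'z) bgraph_scheme \<Rightarrow>
    ('g::{finite, ab_group_add} \<Rightarrow> 'v \<Rightarrow> 'v) \<Rightarrow> ('g \<Rightarrow> 'h \<Rightarrow> 'h) \<Rightarrow> bool" where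
  "free_brauer_action \<Gamma> av ah \<longleftrightarrow> brauer_action \<Gamma> av ah \<and>
     (\<forall>g. \<forall>h\<in>Hs \<Gamma>. ah g ` edge \<Gamma> h = edge \<Gamma> h \<longrightarrow> g = 0)"

definition q_action :: "('v, 'h, 'z) bgraph_scheme \<Rightarrow>
    ('g::{finite, ab_group_add} \<Rightarrow> 'h \<Rightarrow> 'h) \<Rightarrow> ('h \<Rightarrow> 'k::field) \<Rightarrow> bool" where
  "q_action \<Gamma> ah q \<longleftrightarrow> (\<forall>g. \<forall>h\<in>Hs \<Gamma>. nontrunc_edge \<Gamma> h \<longrightarrow>
     q h / q (opp \<Gamma> h) = q (ah g h) / q (ah g (opp \<Gamma> h)))"

definition orb :: "('g::{finite, ab_group_add} \<Rightarrow> 'a \<Rightarrow> 'a) \<Rightarrow> 'a \<Rightarrow> 'a set" where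
  "orb a x = range (\<lambda>g. a g x)"

definition orbit_graph0 :: "('v, 'h, 'z) bgraph_scheme \<Rightarrow>
    ('g::{finite, ab_group_add} \<Rightarrow> 'v \<Rightarrow> 'v) \<Rightarrow> ('g \<Rightarrow> 'h \<Rightarrow> 'h) \<Rightarrow> ('v set, 'h set) bgraph" where
  "orbit_graph0 \<Gamma> av ah =
     \<lparr> Vs = orb av ` Vs \<Gamma>, Hs = orb ah ` Hs \<Gamma>,
       ends = (\<lambda>Ob. orb av (ends \<Gamma> (SOME h. h \<in> Ob))),
       opp = (\<lambda>Ob. orb ah (opp \<Gamma> (SOME h. h \<in> Ob))),
       succ = (\<lambda>Ob. orb ah (succ \<Gamma> (SOME h. h \<in> Ob))),
       mult = (\<lambda>M. 0) \<rparr>"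

definition orbit_graph :: "('v, 'h, 'z) bgraph_scheme \<Rightarrow>
    ('g::{finite, ab_group_add} \<Rightarrow> 'v \<Rightarrow> 'v) \<Rightarrow> ('g \<Rightarrow> 'h \<Rightarrow> 'h) \<Rightarrow> ('v set, 'h set) bgraph" where
  "orbit_graph \<Gamma> av ah = (orbit_graph0 \<Gamma> av ah)\<lparr> mult := (\<lambda>M.
      (let \<mu> = SOME \<mu>. \<mu> \<in> M in val \<Gamma> \<mu> * mult \<Gamma> \<mu> div val (orbit_graph0 \<Gamma> av ah) M)) \<rparr>"

text \<open>choice of representatives: for every occurrence-orbit O of the orbit graph a
  representative occurrence rep O in O, such that the two occurrences of every edge of
  the orbit graph are represented by the two occurrences of one edge i_* of Gamma\<close>
definition valid_rep :: "('v, 'h, 'z) bgraph_scheme \<Rightarrow>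
    ('g::{finite, ab_group_add} \<Rightarrow> 'v \<Rightarrow> 'v) \<Rightarrow> ('g \<Rightarrow> 'h \<Rightarrow> 'h) \<Rightarrow> ('h set \<Rightarrow> 'h) \<Rightarrow> bool" where
  "valid_rep \<Gamma> av ah rep \<longleftrightarrow> (\<forall>Ob\<in>Hs (orbit_graph \<Gamma> av ah).
      rep Ob \<in> Ob \<and> rep (opp (orbit_graph \<Gamma> av ah) Ob) = opp \<Gamma> (rep Ob))"

text \<open>successor weighting associated to the action; the successor pair (O, succ O) at a
  vertex of the orbit graph is indexed by the occurrence O\<close>
definition assoc_weighting :: "('v, 'h, 'z) bgraph_scheme \<Rightarrow>
    ('g::{finite, ab_group_add} \<Rightarrow> 'v \<Rightarrow> 'v) \<Rightarrow> ('g \<Rightarrow> 'h \<Rightarrow> 'h) \<Rightarrow> ('h set \<Rightarrow> 'h) \<Rightarrow> 'h set \<Rightarrow> 'g" where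
  "assoc_weighting \<Gamma> av ah rep Ob =
     (THE g. succ \<Gamma> (rep Ob) = ah g (rep (succ (orbit_graph \<Gamma> av ah) Ob)))"

text \<open>equivariant choice E_1 of one occurrence of each edge not truncated at either end\<close>
definition valid_E1 :: "('v, 'h, 'z) bgraph_scheme \<Rightarrow>
    ('g::{finite, ab_group_add} \<Rightarrow> 'h \<Rightarrow> 'h) \<Rightarrow> ('h \<Rightarrow> 'h) \<Rightarrow> bool" where
  "valid_E1 \<Gamma> ah E1 \<longleftrightarrow> (\<forall>h\<in>Hs \<Gamma>. nontrunc_edge \<Gamma> h \<longrightarrow>
      E1 h \<in> edge \<Gamma> h \<and> E1 (opp \<Gamma> h) = E1 h \<and> (\<forall>g. E1 (ah g h) = ah g (E1 h)))"

definition qbar :: "('h \<Rightarrow> 'k::field) \<Rightarrow> ('h \<Rightarrow> 'h) \<Rightarrow> 'h set \<Rightarrow> 'k" where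
  "qbar q E1 Ob = (let h = SOME h. h \<in> Ob in q h / q (E1 h))"

text \<open>A successor weighting on Delta is a function on occurrences h, W h being the weight of
  the successor pair (h, succ h) at ends h.\<close>

definition omega :: "('v, 'h, 'z) bgraph_scheme \<Rightarrow> ('h \<Rightarrow> 'g::{finite, ab_group_add}) \<Rightarrow> 'v \<Rightarrow> 'g" where
  "omega \<Delta> W \<mu> = (\<Sum>h\<in>atv \<Delta> \<mu>. W h)"

definition nsm :: "nat \<Rightarrow> 'g::ab_group_add \<Rightarrow> 'g" where
  "nsm n w = ((+) w ^^ n) 0"

definition gord :: "'g::{finite, ab_group_add} \<Rightarrow> nat" where
  "gord w = (LEAST n. n > 0 \<and> nsm n w = 0)"

definition cyc_sub :: "'g::{finite, ab_group_add} \<Rightarrow> 'g set" where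
  "cyc_sub w = \<Inter>{S. w \<in> S \<and> 0 \<in> S \<and> (\<forall>x\<in>S. \<forall>y\<in>S. x + y \<in> S) \<and> (\<forall>x\<in>S. - x \<in> S)}"

definition Hsub :: "('v, 'h, 'z) bgraph_scheme \<Rightarrow> ('h \<Rightarrow> 'g::{finite, ab_group_add}) \<Rightarrow> 'v \<Rightarrow> 'g set" where
  "Hsub \<Delta> W \<mu> = cyc_sub (omega \<Delta> W \<mu>)"

definition coset :: "'g::ab_group_add set \<Rightarrow> 'g \<Rightarrow> 'g set" where
  "coset S g = (\<lambda>x. x + g) ` S"

definition brauer_weighting :: "('v, 'h, 'z) bgraph_scheme \<Rightarrow> ('h \<Rightarrow> 'g::{finite, ab_group_add}) \<Rightarrow> bool" where
  "brauer_weighting \<Delta> W \<longleftrightarrow> (\<forall>\<mu>\<in>Vs \<Delta>. gord (omega \<Delta> W \<mu>) dvd mult \<Delta> \<mu>)"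

definition cpairs :: "('v, 'h, 'z) bgraph_scheme \<Rightarrow> ('h \<Rightarrow> 'g::{finite, ab_group_add}) \<Rightarrow> 'v \<Rightarrow> ('h \<times> 'g set) set" where
  "cpairs \<Delta> W \<mu> = {(h, coset (Hsub \<Delta> W \<mu>) g) | h g. h \<in> atv \<Delta> \<mu>}"

definition crel :: "('v, 'h, 'z) bgraph_scheme \<Rightarrow> ('h \<Rightarrow> 'g::{finite, ab_group_add}) \<Rightarrow> 'v \<Rightarrow>
    (('h \<times> 'g set) \<times> ('h \<times> 'g set)) set" where
  "crel \<Delta> W \<mu> = {((h, C), (succ \<Delta> h, (\<lambda>x. x + W h) ` C)) | h C. (h, C) \<in> cpairs \<Delta> W \<mu>}"

text \<open>the class [h, H_mu g] of the equivalence relation generated by the steps\<close>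
definition cls :: "('v, 'h, 'z) bgraph_scheme \<Rightarrow> ('h \<Rightarrow> 'g::{finite, ab_group_add}) \<Rightarrow> 'v \<Rightarrow>
    'h \<times> 'g set \<Rightarrow> ('h \<times> 'g set) set" where
  "cls \<Delta> W \<mu> x = (crel \<Delta> W \<mu> \<union> (crel \<Delta> W \<mu>)\<inverse>)\<^sup>* `` {x}"

definition Dset :: "('v, 'h, 'z) bgraph_scheme \<Rightarrow> ('h \<Rightarrow> 'g::{finite, ab_group_add}) \<Rightarrow> 'v \<Rightarrow>
    ('h \<times> 'g set) set set" where
  "Dset \<Delta> W \<mu> = cls \<Delta> W \<mu> ` cpairs \<Delta> W \<mu>"

text \<open>Brauer covering graph: vertex mu_d is (mu, d), edge occurrence of i_g at its end
  coming from the occurrence h of i is (h, g)\<close>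
definition cover :: "('v, 'h, 'z) bgraph_scheme \<Rightarrow> ('h \<Rightarrow> 'g::{finite, ab_group_add}) \<Rightarrow>
    ('v \<times> ('h \<times> 'g set) set, 'h \<times> 'g) bgraph" where
  "cover \<Delta> W =
     \<lparr> Vs = {(\<mu>, d) | \<mu> d. \<mu> \<in> Vs \<Delta> \<and> d \<in> Dset \<Delta> W \<mu>},
       Hs = Hs \<Delta> \<times> UNIV,
       ends = (\<lambda>(h, g). (ends \<Delta> h, cls \<Delta> W (ends \<Delta> h) (h, coset (Hsub \<Delta> W (ends \<Delta> h)) g))),
       opp = (\<lambda>(h, g). (opp \<Delta> h, g)),
       succ = (\<lambda>(h, g). (succ \<Delta> h, g + W h)),
       mult = (\<lambda>(\<mu>, d). mult \<Delta> \<mu> div gord (omega \<Delta> W \<mu>)) \<rparr>"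

definition qcover :: "('h \<Rightarrow> 'k) \<Rightarrow> 'h \<times> 'g \<Rightarrow> 'k" where
  "qcover q = (\<lambda>(h, g). q h)"

end

theory Submission
  imports Defs
begin

text \<open>
  Freeness gives every occurrence h of an edge a unique
  coordinate coord h in G with h = coord h \<cdot> rep (G h).  The map h \<mapsto> (G h, coord h) is
  a bijection onto the occurrences of the cover, it commutes with opp (by the choice of
  representatives) and with succ (since coord (succ h) = coord h + W (G h)).  On vertices,
  \<nu> is sent to its orbit together with the class of any occurrence at \<nu>; injectivity uses
  that the subgroup H generated by omega fixes \<nu>.  The central count
  val \<nu> = val (G \<nu>) * ord (omega) comes from following the successor cycle at \<nu>: going
  once around the orbit vertex moves an occurrence by omega, and freeness makes the order
  exact.  It yields both the Brauer weighting property and equality of multiplicities.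
  Finally, a general transport lemma shows that a Brauer graph isomorphism carries the
  ideal I_Gamma onto I_Gamma' whenever the quantizations agree up to one scalar per edge,
  which holds for the quantization qbar of the cover.
\<close>

section \<open>Cyclic iteration of an injective map on a finite set\<close>

lemma funpow_in:
  assumes "\<forall>y\<in>A. f y \<in> A" "y \<in> A" shows "(f ^^ k) y \<in> A"
  using assms by (induction k) auto

lemma funpow_inj_cancel:
  assumes "\<forall>y\<in>A. f y \<in> A" "inj_on f A" "y \<in> A" "z \<in> A" "(f ^^ k) y = (f ^^ k) z"
  shows "y = z"
  using assms(5)
proof (induction k)
  case (Suc k)
  have "(f ^^ k) y \<in> A" "(f ^^ k) z \<in> A" using funpow_in[OF assms(1)] assms(3,4) by blast+
  then show ?case using Suc assms(2) by (auto dest: inj_onD)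
qed simp

lemma funpow_inj_shift:
  assumes "\<forall>y\<in>A. f y \<in> A" "inj_on f A" "x \<in> A" "m < n" "(f ^^ m) x = (f ^^ n) x"
  shows "(f ^^ (n - m)) x = x"
proof -
  have "(f ^^ m) ((f ^^ (n - m)) x) = (f ^^ (m + (n - m))) x" by (simp add: funpow_add)
  also have "\<dots> = (f ^^ m) x" using assms(4,5) by simp
  finally have "(f ^^ m) ((f ^^ (n - m)) x) = (f ^^ m) x" .
  then show ?thesis by (rule funpow_inj_cancel[OF assms(1,2) funpow_in[OF assms(1,3)] assms(3)])
qed

text \<open>Pigeonhole: an injective self-map of a finite set brings every point back.\<close>
lemma funpow_returns:
  assumes fin: "finite A" and maps: "\<forall>y\<in>A. f y \<in> A" and inj: "inj_on f A" and x: "x \<in> A"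
  shows "\<exists>n>0. (f ^^ n) x = x"
proof -
  have "\<not> inj_on (\<lambda>n. (f ^^ n) x) {0..card A}"
  proof
    assume "inj_on (\<lambda>n. (f ^^ n) x) {0..card A}"
    then have "card ((\<lambda>n. (f ^^ n) x) ` {0..card A}) = card {0..card A}" by (rule card_image)
    moreover have "card ((\<lambda>n. (f ^^ n) x) ` {0..card A}) \<le> card A"
      using funpow_in[OF maps x] fin by (intro card_mono) auto
    ultimately show False by simp
  qed
  then obtain a b where ab: "a < b" "(f ^^ a) x = (f ^^ b) x"
    unfolding inj_on_def by (metis linorder_neqE_nat)
  have "(f ^^ (b - a)) x = x" by (rule funpow_inj_shift[OF maps inj x ab])
  moreover have "0 < b - a" using ab(1) by simp
  ultimately show ?thesis by blast
qed

lemma funpow_period: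
  assumes fin: "finite A" and maps: "\<forall>y\<in>A. f y \<in> A" and inj: "inj_on f A" and x: "x \<in> A"
    and p: "p = (LEAST n. 0 < n \<and> (f ^^ n) x = x)"
  shows "0 < p" and "(f ^^ n) x = (f ^^ (n mod p)) x" and "(f ^^ n) x = x \<longleftrightarrow> p dvd n"
    and "inj_on (\<lambda>n. (f ^^ n) x) {..<p}"
proof -
  obtain n0 where "0 < n0" "(f ^^ n0) x = x" using funpow_returns[OF fin maps inj x] by blast
  then have pP: "0 < p \<and> (f ^^ p) x = x" unfolding p by (rule LeastI[of _ n0, OF conjI])
  have pmin: "\<And>n. 0 < n \<Longrightarrow> n < p \<Longrightarrow> (f ^^ n) x \<noteq> x"
    unfolding p using not_less_Least by blast
  show "0 < p" using pP by simp
  have md: "(f ^^ k) x = (f ^^ (k mod p)) x" for k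
    using funpow_mod_eq[where f=f and n=p and x=x and m=k] pP by simp
  then show "(f ^^ n) x = (f ^^ (n mod p)) x" .
  have "n mod p < p" using pP by simp
  then show "(f ^^ n) x = x \<longleftrightarrow> p dvd n"
    unfolding md[of n] using pmin[of "n mod p"] by (auto simp: dvd_eq_mod_eq_0)
  have ne: "(f ^^ m) x \<noteq> (f ^^ n) x" if "m < n" "n < p" for m n
  proof
    assume "(f ^^ m) x = (f ^^ n) x"
    then have "(f ^^ (n - m)) x = x" by (rule funpow_inj_shift[OF maps inj x that(1)])
    then show False using pmin[of "n - m"] that by simp
  qed
  show "inj_on (\<lambda>n. (f ^^ n) x) {..<p}"
  proof (rule inj_onI)
    fix m n assume "m \<in> {..<p}" "n \<in> {..<p}" "(f ^^ m) x = (f ^^ n) x"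
    then show "m = n" using ne[of m n] ne[of n m] by (cases m n rule: linorder_cases) auto
  qed
qed

lemma cycle_lemma:
  assumes fin: "finite A" and maps: "\<forall>y\<in>A. f y \<in> A" and inj: "inj_on f A"
    and x: "x \<in> A" and cov: "\<forall>y\<in>A. \<exists>n. (f ^^ n) x = y"
  shows "\<forall>n. ((f ^^ n) x = x) = (card A dvd n)"
    and "bij_betw (\<lambda>n. (f ^^ n) x) {..<card A} A"
proof -
  define p where "p = (LEAST n. 0 < n \<and> (f ^^ n) x = x)"
  note per = funpow_period[OF fin maps inj x p_def]
  have img: "(\<lambda>n. (f ^^ n) x) ` {..<p} = A"
  proof
    show "(\<lambda>n. (f ^^ n) x) ` {..<p} \<subseteq> A" using funpow_in[OF maps x] by auto
    show "A \<subseteq> (\<lambda>n. (f ^^ n) x) ` {..<p}"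
    proof
      fix y assume "y \<in> A"
      then obtain n where "(f ^^ n) x = y" using cov by blast
      then show "y \<in> (\<lambda>n. (f ^^ n) x) ` {..<p}"
        using per(1) per(2)[of n] by (intro image_eqI[of _ _ "n mod p"]) auto
    qed
  qed
  have "card A = p" using card_image[OF per(4)] img by simp
  then show "\<forall>n. ((f ^^ n) x = x) = (card A dvd n)"
    and "bij_betw (\<lambda>n. (f ^^ n) x) {..<card A} A"
    using per(3,4) img by (auto simp: bij_betw_def)
qed

lemma nsm_0 [simp]: "nsm 0 w = 0" by (simp add: nsm_def)
lemma nsm_Suc: "nsm (Suc n) w = w + nsm n w" by (simp add: nsm_def)

text \<open>The order of w is the period of 0 under translation by w.\<close>
lemma gord_props:
  fixes w :: "'g::{finite, ab_group_add}"
  shows "0 < gord w" "nsm (gord w) w = 0" "nsm n w = 0 \<longleftrightarrow> gord w dvd n"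
proof -
  have p: "gord w = (LEAST n. 0 < n \<and> ((+) w ^^ n) 0 = 0)" by (simp add: gord_def nsm_def)
  have maps: "\<forall>y\<in>UNIV. w + y \<in> UNIV" and inj: "inj_on ((+) w) UNIV" by simp_all
  note per = funpow_period[OF finite_UNIV maps inj UNIV_I p]
  show "0 < gord w" by (rule per(1))
  show dvd: "nsm n w = 0 \<longleftrightarrow> gord w dvd n" for n unfolding nsm_def by (rule per(3))
  show "nsm (gord w) w = 0" using dvd[of "gord w"] by simp
qed

lemma cyc_sub_sub:
  assumes "w \<in> S" "0 \<in> S" "\<forall>x\<in>S. \<forall>y\<in>S. x + y \<in> S" "\<forall>x\<in>S. - x \<in> S"
  shows "cyc_sub w \<subseteq> S"
  unfolding cyc_sub_def using assms by blast

lemma zero_cyc_sub: "0 \<in> cyc_sub w" unfolding cyc_sub_def by blast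

lemma bg_basic:
  assumes "is_bgraph G" "h \<in> Hs G"
  shows "ends G h \<in> Vs G" "opp G h \<in> Hs G" "opp G h \<noteq> h" "opp G (opp G h) = h"
    "succ G h \<in> Hs G" "ends G (succ G h) = ends G h"
  using assms unfolding is_bgraph_def by auto

lemma bg_fin: "is_bgraph G \<Longrightarrow> finite (Hs G)" "is_bgraph G \<Longrightarrow> finite (Vs G)"
  "is_bgraph G \<Longrightarrow> inj_on (succ G) (Hs G)"
  unfolding is_bgraph_def by auto

lemma funpow_succ_Hs:
  "is_bgraph G \<Longrightarrow> h \<in> Hs G \<Longrightarrow> (succ G ^^ n) h \<in> Hs G \<and> ends G ((succ G ^^ n) h) = ends G h"
  by (induction n) (auto simp: bg_basic)

lemma succ_reaches:
  "is_bgraph G \<Longrightarrow> h \<in> Hs G \<Longrightarrow> h' \<in> Hs G \<Longrightarrow> ends G h' = ends G h \<Longrightarrow> \<exists>n. (succ G ^^ n) h = h'"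
  unfolding is_bgraph_def atv_def by blast

lemma bg_cycle:
  assumes G: "is_bgraph G" and h: "h \<in> Hs G"
  shows "\<forall>n. ((succ G ^^ n) h = h) = (val G (ends G h) dvd n)"
    "bij_betw (\<lambda>n. (succ G ^^ n) h) {..<val G (ends G h)} (atv G (ends G h))"
proof -
  have A: "finite (atv G (ends G h))" "\<forall>y\<in>atv G (ends G h). succ G y \<in> atv G (ends G h)"
    "inj_on (succ G) (atv G (ends G h))" "h \<in> atv G (ends G h)"
    "\<forall>y\<in>atv G (ends G h). \<exists>n. (succ G ^^ n) h = y"
    using G h unfolding is_bgraph_def atv_def by (auto intro: inj_on_subset)
  show "\<forall>n. ((succ G ^^ n) h = h) = (val G (ends G h) dvd n)"
    "bij_betw (\<lambda>n. (succ G ^^ n) h) {..<val G (ends G h)} (atv G (ends G h))"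
    using cycle_lemma[OF A] unfolding val_def by auto
qed

lemma bg_conn: "is_bgraph G \<Longrightarrow> \<mu> \<in> Vs G \<Longrightarrow> \<nu> \<in> Vs G \<Longrightarrow>
   (\<mu>, \<nu>) \<in> {(ends G h, ends G (opp G h)) | h. h \<in> Hs G}\<^sup>*"
  unfolding is_bgraph_def by blast

text \<open>By connectedness every vertex carries an occurrence.\<close>
lemma bg_vertex_has_half:
  assumes G: "is_bgraph G" and v: "v \<in> Vs G"
  shows "\<exists>h\<in>Hs G. ends G h = v"
proof -
  obtain h0 where h0: "h0 \<in> Hs G" using G unfolding is_bgraph_def by auto
  have "(ends G h0, v) \<in> {(ends G h, ends G (opp G h)) | h. h \<in> Hs G}\<^sup>*"
    using bg_conn[OF G bg_basic(1)[OF G h0] v] .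
  then show ?thesis
  proof (cases rule: rtranclE)
    case base then show ?thesis using h0 by blast
  next
    case (step y)
    then obtain h where "h \<in> Hs G" "v = ends G (opp G h)" by auto
    then show ?thesis using bg_basic[OF G] by blast
  qed
qed

lemma truncated_atv:
  assumes "truncated G h" "h \<in> Hs G" shows "atv G (ends G h) = {h}"
proof -
  have "card (atv G (ends G h)) = 1" using assms(1) by (simp add: truncated_def val_def)
  then obtain x where "atv G (ends G h) = {x}" by (rule card_1_singletonE)
  moreover have "h \<in> atv G (ends G h)" using assms(2) by (simp add: atv_def)
  ultimately show ?thesis by simp
qed

lemma both_trunc_special:
  assumes G: "is_bgraph G" and h: "h \<in> Hs G" and t1: "truncated G h" and t2: "truncated G (opp G h)"
  shows "special G"
proof -
  let ?\<mu> = "ends G h" and ?\<nu> = "ends G (opp G h)"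
  have oh: "opp G h \<in> Hs G" "opp G h \<noteq> h" "opp G (opp G h) = h" using bg_basic[OF G h] by auto
  have a1: "atv G ?\<mu> = {h}" and a2: "atv G ?\<nu> = {opp G h}"
    using truncated_atv[OF t1 h] truncated_atv[OF t2 oh(1)] .
  have ne: "?\<mu> \<noteq> ?\<nu>" using a1 a2 oh(2) by auto
  have only: "k \<in> {h, opp G h}" if "k \<in> Hs G" "ends G k \<in> {?\<mu>, ?\<nu>}" for k
    using that a1 a2 by (auto simp: atv_def)
  have reach: "y \<in> {?\<mu>, ?\<nu>}" if "(?\<mu>, y) \<in> {(ends G k, ends G (opp G k)) | k. k \<in> Hs G}\<^sup>*" for y
    using that
  proof (induction rule: rtrancl_induct)
    case (step y z)
    then obtain k where k: "k \<in> Hs G" "y = ends G k" "z = ends G (opp G k)" by auto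
    then show ?case using only[OF k(1)] step(3) oh by auto
  qed simp
  have "Hs G \<subseteq> {h, opp G h}"
  proof
    fix k assume k: "k \<in> Hs G"
    have "(?\<mu>, ends G k) \<in> {(ends G k, ends G (opp G k)) | k. k \<in> Hs G}\<^sup>*"
      by (rule bg_conn[OF G bg_basic(1)[OF G h] bg_basic(1)[OF G k]])
    then show "k \<in> {h, opp G h}" using only[OF k] reach by blast
  qed
  then have "Hs G = {h, opp G h}" using h oh by auto
  then show ?thesis unfolding special_def using ne t1 t2 h by (auto simp: truncated_def)
qed

section \<open>Paths and the path algebra\<close>

lemma pend_Nil [simp]: "pend G v [] = v" by (simp add: pend_def)
lemma pend_Cons [simp]: "pend G v (a # as) = pend G (tgt G a) as" by (simp add: pend_def)

lemma pathfrom_append: "pathfrom G v (xs @ ys) \<longleftrightarrow> pathfrom G v xs \<and> pathfrom G (pend G v xs) ys"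
  by (induction xs arbitrary: v) auto

lemma pend_append: "pend G v (xs @ ys) = pend G (pend G v xs) ys"
  by (induction xs arbitrary: v) auto

lemma pathfrom_pow: "pathfrom G E L \<and> pend G E L = E \<Longrightarrow>
   pathfrom G E (concat (replicate m L)) \<and> pend G E (concat (replicate m L)) = E"
  by (induction m) (auto simp: pathfrom_append pend_append)

lemma pmul_app: "pmul G f g (v, as) =
    (\<Sum>k\<in>{0..length as}. f (v, take k as) * g (pend G v (take k as), drop k as))"
  by (simp add: pmul_def)

text \<open>A scalar multiple of a generator supported on paths starting at a quiver vertex E
  lies in the generated ideal: it is the product with the scaled trivial path at E.\<close>
lemma smul_gen:
  assumes s: "s \<in> S" and E: "E \<in> QV G" and sup: "\<forall>v as. v \<noteq> E \<longrightarrow> s (v, as) = 0"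
  shows "(\<lambda>p. c * s p) \<in> ideal_gen G S"
proof -
  define x where "x = (\<lambda>p. c * basis (E, []) p)"
  have "{p. x p \<noteq> 0} \<subseteq> {(E, [])}" unfolding x_def basis_def by auto
  then have "finite {p. x p \<noteq> 0}" by (rule finite_subset) simp
  moreover have "\<forall>p. x p \<noteq> 0 \<longrightarrow> is_path G p" using E unfolding x_def basis_def is_path_def by auto
  ultimately have xK: "x \<in> KQ G" by (simp add: KQ_def)
  have summand: "x (v, take k as) * s (pend G v (take k as), drop k as) =
      (if k = 0 then c * s (v, as) else 0)" if "k \<in> {0..length as}" for v as k
    using that sup by (cases "k = 0") (auto simp: x_def basis_def)
  have "pmul G x s (v, as) = c * s (v, as)" for v as
  proof -
    have "pmul G x s (v, as) = (\<Sum>k\<in>{0..length as}. if k = 0 then c * s (v, as) else 0)"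
      unfolding pmul_app by (rule sum.cong[OF refl summand])
    also have "\<dots> = c * s (v, as)" by (simp add: sum.delta)
    finally show ?thesis .
  qed
  then have "pmul G x s = (\<lambda>p. c * s p)" by (auto intro!: ext)
  then show ?thesis using ideal_gen.lmul[OF xK ideal_gen.gen[OF s]] by simp
qed

definition rel1 :: "('v, 'h, 'z) bgraph_scheme \<Rightarrow> ('h \<Rightarrow> 'k::field) \<Rightarrow> 'h \<Rightarrow> ('h set \<times> 'h arr list \<Rightarrow> 'k)" where
  "rel1 G q h = (\<lambda>p. q h * basis (edge G h, CycPow G h) p - q (opp G h) * basis (edge G h, CycPow G (opp G h)) p)"

definition rel2 :: "('v, 'h, 'z) bgraph_scheme \<Rightarrow> 'h \<Rightarrow> ('h set \<times> 'h arr list \<Rightarrow> 'k::field)" where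
  "rel2 G h = basis (edge G h, CycPow G (opp G h) @ [Arr (opp G h)])"

definition zero_pair :: "('v, 'h, 'z) bgraph_scheme \<Rightarrow> 'h arr \<Rightarrow> 'h arr \<Rightarrow> bool" where
  "zero_pair G a b \<longleftrightarrow> a \<in> QA G \<and> b \<in> QA G \<and> tgt G a = src G b \<and>
                 \<not> (\<exists>k\<in>Hs G. \<not> truncated G k \<and> (\<exists>xs ys. Cyc G k = xs @ [a, b] @ ys))"

lemma rels1_alt: "rels1 G q = {rel1 G q h | h. h \<in> Hs G \<and> nontrunc_edge G h}"
  unfolding rels1_def rel1_def ..
lemma rels2_alt: "rels2 G = {rel2 G h | h. h \<in> Hs G \<and> truncated G h}"
  unfolding rels2_def rel2_def ..
lemma rels3_alt: "rels3 G = {basis (src G a, [a, b]) | a b. zero_pair G a b}"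
  unfolding rels3_def zero_pair_def ..

lemma rel1_supp: "v \<noteq> edge G h \<Longrightarrow> rel1 G q h (v, as) = 0"
  unfolding rel1_def basis_def by simp

section \<open>Transport of the Brauer graph algebra along an isomorphism\<close>

text \<open>Arrow names referring to occurrences of G; the induced map on arrows is injective
  on them.\<close>
definition okarr :: "('v, 'h, 'z) bgraph_scheme \<Rightarrow> 'h arr \<Rightarrow> bool" where
  "okarr G a = (case a of Arr h \<Rightarrow> h \<in> Hs G | X \<Rightarrow> True)"

lemma QA_ok: "a \<in> QA G \<Longrightarrow> okarr G a"
  by (auto simp: QA_def okarr_def split: if_splits)

locale bgraph_iso =
  fixes G :: "('v, 'h, 'z) bgraph_scheme" and G' :: "('w, 'e, 'y) bgraph_scheme"
    and fv :: "'v \<Rightarrow> 'w" and fh :: "'h \<Rightarrow> 'e"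
  assumes G: "is_bgraph G" and iso: "bgiso G G' fv fh"
begin

lemma bijv: "bij_betw fv (Vs G) (Vs G')" and bijh: "bij_betw fh (Hs G) (Hs G')"
  and comp: "\<And>h. h \<in> Hs G \<Longrightarrow> ends G' (fh h) = fv (ends G h) \<and> opp G' (fh h) = fh (opp G h) \<and>
                 succ G' (fh h) = fh (succ G h)"
  and multc: "\<And>\<mu>. \<mu> \<in> Vs G \<Longrightarrow> mult G' (fv \<mu>) = mult G \<mu>"
  using iso unfolding bgiso_def by auto

lemma Hs': "Hs G' = fh ` Hs G" using bijh by (simp add: bij_betw_def)
lemma injh: "inj_on fh (Hs G)" using bijh by (simp add: bij_betw_def)
lemma injv: "inj_on fv (Vs G)" using bijv by (simp add: bij_betw_def)

lemma succ_pow: "h \<in> Hs G \<Longrightarrow> (succ G' ^^ n) (fh h) = fh ((succ G ^^ n) h)"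
  by (induction n) (auto simp: comp funpow_succ_Hs[OF G])

lemma atv': "\<mu> \<in> Vs G \<Longrightarrow> atv G' (fv \<mu>) = fh ` atv G \<mu>"
proof
  assume mu: "\<mu> \<in> Vs G"
  show "atv G' (fv \<mu>) \<subseteq> fh ` atv G \<mu>"
  proof
    fix x assume "x \<in> atv G' (fv \<mu>)"
    then obtain h where h: "h \<in> Hs G" "x = fh h" "fv (ends G h) = fv \<mu>"
      using Hs' comp by (auto simp: atv_def)
    then have "ends G h = \<mu>" using injv mu bg_basic[OF G h(1)] by (auto dest: inj_onD)
    then show "x \<in> fh ` atv G \<mu>" using h by (auto simp: atv_def)
  qed
  show "fh ` atv G \<mu> \<subseteq> atv G' (fv \<mu>)" using comp Hs' by (auto simp: atv_def)
qed

lemma val': "\<mu> \<in> Vs G \<Longrightarrow> val G' (fv \<mu>) = val G \<mu>"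
proof -
  assume mu: "\<mu> \<in> Vs G"
  have "inj_on fh (atv G \<mu>)" using injh by (rule inj_on_subset) (auto simp: atv_def)
  then show ?thesis unfolding val_def using atv'[OF mu] by (simp add: card_image)
qed

lemma trunc': "h \<in> Hs G \<Longrightarrow> truncated G' (fh h) \<longleftrightarrow> truncated G h"
  unfolding truncated_def using comp val' multc bg_basic[OF G] by simp

lemma nontrunc': "h \<in> Hs G \<Longrightarrow> nontrunc_edge G' (fh h) \<longleftrightarrow> nontrunc_edge G h"
  unfolding nontrunc_edge_def using comp trunc' bg_basic[OF G] by simp

lemma edge': "h \<in> Hs G \<Longrightarrow> edge G' (fh h) = fh ` edge G h"
  unfolding edge_def using comp by simp

lemma edge_sub: "h \<in> Hs G \<Longrightarrow> edge G h \<subseteq> Hs G"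
  unfolding edge_def using bg_basic[OF G] by simp

lemma edge_opp: "h \<in> Hs G \<Longrightarrow> edge G (opp G h) = edge G h"
  unfolding edge_def using bg_basic[OF G] by auto

lemma edge_QV: "h \<in> Hs G \<Longrightarrow> edge G h \<in> QV G" by (simp add: QV_def Edges_def)

lemma special': "special G' \<longleftrightarrow> special G"
proof
  assume "special G'"
  then obtain h' where h': "h' \<in> Hs G'" "Hs G' = {h', opp G' h'}" "ends G' h' \<noteq> ends G' (opp G' h')"
    "mult G' (ends G' h') = 1" "mult G' (ends G' (opp G' h')) = 1" unfolding special_def by blast
  obtain h where h: "h \<in> Hs G" "h' = fh h" using h' Hs' by auto
  have oh: "opp G h \<in> Hs G" using bg_basic[OF G h(1)] by simp
  have "fh ` Hs G = fh ` {h, opp G h}" using h' h comp by (simp add: Hs')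
  moreover have "{h, opp G h} \<subseteq> Hs G" using oh h by simp
  ultimately have "Hs G = {h, opp G h}" using inj_on_image_eq_iff[OF injh subset_refl] by blast
  moreover have "ends G h \<noteq> ends G (opp G h)" using h' h comp oh by auto
  moreover have "mult G (ends G h) = 1" "mult G (ends G (opp G h)) = 1"
    using h' h comp oh multc bg_basic[OF G] by auto
  ultimately show "special G" unfolding special_def using h by blast
next
  assume "special G"
  then obtain h where h: "h \<in> Hs G" "Hs G = {h, opp G h}" "ends G h \<noteq> ends G (opp G h)"
    "mult G (ends G h) = 1" "mult G (ends G (opp G h)) = 1" unfolding special_def by blast
  have oh: "opp G h \<in> Hs G" using bg_basic[OF G h(1)] by simp
  have "Hs G' = {fh h, opp G' (fh h)}" using h comp Hs' by auto
  moreover have "ends G' (fh h) \<noteq> ends G' (opp G' (fh h))"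
    using h comp oh injv bg_basic[OF G] by (auto dest: inj_onD)
  moreover have "mult G' (ends G' (fh h)) = 1" "mult G' (ends G' (opp G' (fh h))) = 1"
    using h comp oh multc bg_basic[OF G] by auto
  ultimately show "special G'" unfolding special_def using h Hs' by blast
qed

abbreviation Fa where "Fa \<equiv> map_arr fh"

lemma QA': "QA G' = Fa ` QA G"
proof (cases "special G")
  case True then show ?thesis using special' by (simp add: QA_def)
next
  case False
  then have "QA G' = Arr ` {h \<in> Hs G'. \<not> truncated G' h}" using special' by (simp add: QA_def)
  also have "\<dots> = Arr ` fh ` {h \<in> Hs G. \<not> truncated G h}" using Hs' trunc' by auto
  also have "\<dots> = Fa ` QA G" using False by (simp add: QA_def image_image)
  finally show ?thesis .
qed

lemma src': "a \<in> QA G \<Longrightarrow> src G' (Fa a) = fh ` src G a"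
  by (cases a) (auto simp: QA_def edge' Hs' split: if_splits)

lemma tgt': "a \<in> QA G \<Longrightarrow> tgt G' (Fa a) = fh ` tgt G a"
  by (cases a) (auto simp: QA_def edge' Hs' comp bg_basic[OF G] split: if_splits)

lemma QA_Arr: "Arr x \<in> QA G \<Longrightarrow> x \<in> Hs G"
  by (auto simp: QA_def split: if_splits)

lemma src_sub: "a \<in> QA G \<Longrightarrow> src G a \<subseteq> Hs G"
  by (cases a) (auto dest: QA_Arr edge_sub)

lemma tgt_sub: "a \<in> QA G \<Longrightarrow> tgt G a \<subseteq> Hs G"
  by (cases a) (auto dest!: QA_Arr simp: edge_def bg_basic[OF G])

lemma QV_special: "special G \<Longrightarrow> Hs G \<in> QV G"
  unfolding special_def QV_def Edges_def edge_def by blast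

lemma src_QV: "a \<in> QA G \<Longrightarrow> src G a \<in> QV G"
  by (cases a) (auto simp: QA_def QV_special edge_QV split: if_splits)

lemma tgt_QV: "a \<in> QA G \<Longrightarrow> tgt G a \<in> QV G"
  by (cases a) (auto simp: QA_def QV_special bg_basic(5)[OF G] edge_QV split: if_splits)

lemma pend_QV: "pathfrom G v as \<Longrightarrow> v \<in> QV G \<Longrightarrow> pend G v as \<in> QV G"
  by (induction as arbitrary: v) (auto simp: tgt_QV)

lemma Fa_inj: "okarr G a \<Longrightarrow> okarr G b \<Longrightarrow> Fa a = Fa b \<Longrightarrow> a = b"
  by (cases a; cases b) (auto simp: okarr_def dest: inj_onD[OF injh])

lemma map_Fa_inj: "\<forall>a\<in>set xs. okarr G a \<Longrightarrow> \<forall>a\<in>set ys. okarr G a \<Longrightarrow> map Fa xs = map Fa ys \<Longrightarrow> xs = ys"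
  by (rule list.inj_map_strong[of xs ys Fa Fa]) (auto intro: Fa_inj)

lemma path_fwd: "pathfrom G v as \<Longrightarrow> pathfrom G' (fh ` v) (map Fa as)"
  by (induction as arbitrary: v) (auto simp: QA' src' tgt')

lemma pend': "pathfrom G v as \<Longrightarrow> pend G' (fh ` v) (map Fa as) = fh ` pend G v as"
  by (induction as arbitrary: v) (auto simp: tgt')

lemma path_bwd: "pathfrom G' (fh ` v) as' \<Longrightarrow> v \<subseteq> Hs G \<Longrightarrow> \<exists>as. pathfrom G v as \<and> map Fa as = as'"
proof (induction as' arbitrary: v)
  case (Cons a' as')
  then obtain a where a: "a \<in> QA G" "a' = Fa a" using QA' by auto
  have "fh ` src G a = fh ` v" using Cons a src' by simp
  then have sv: "src G a = v" using injh src_sub[OF a(1)] Cons by (simp add: inj_on_image_eq_iff)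
  have "pathfrom G' (fh ` tgt G a) as'" using Cons a tgt' by simp
  then obtain as where "pathfrom G (tgt G a) as" "map Fa as = as'" using Cons.IH tgt_sub[OF a(1)] by blast
  then show ?case using a sv by (intro exI[of _ "a # as"]) auto
qed simp

lemma QV': "QV G' = (\<lambda>E. fh ` E) ` QV G"
proof -
  have "QV G' = (\<lambda>h. edge G' (fh h)) ` Hs G" unfolding QV_def Edges_def Hs' image_image ..
  also have "\<dots> = (\<lambda>h. fh ` edge G h) ` Hs G" using edge' by (rule image_cong[OF refl])
  finally show ?thesis unfolding QV_def Edges_def image_image .
qed

lemma QV_sub: "v \<in> QV G \<Longrightarrow> v \<subseteq> Hs G"
  unfolding QV_def Edges_def using edge_sub by auto

lemma pathfrom_ok: "pathfrom G v as \<Longrightarrow> \<forall>a\<in>set as. okarr G a"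
  by (induction as arbitrary: v) (auto simp: QA_ok)

lemma is_path_fwd: "is_path G p \<Longrightarrow> is_path G' (pathmap fh p)"
  unfolding is_path_def pathmap_def using path_fwd QV' by auto

lemma pm_inj: "inj_on (pathmap fh) {p. is_path G p}"
proof (rule inj_onI)
  fix p q assume p: "p \<in> {p. is_path G p}" and q: "q \<in> {p. is_path G p}" and e: "pathmap fh p = pathmap fh q"
  have "fh ` fst p = fh ` fst q" using e unfolding pathmap_def by simp
  moreover have "fst p \<subseteq> Hs G" "fst q \<subseteq> Hs G" using p q QV_sub unfolding is_path_def by auto
  ultimately have "fst p = fst q" using inj_on_image_eq_iff[OF injh] by blast
  moreover have "snd p = snd q"
  proof -
    have "\<forall>a\<in>set (snd p). okarr G a" "\<forall>a\<in>set (snd q). okarr G a"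
      using p q pathfrom_ok unfolding is_path_def by auto
    moreover have "map Fa (snd p) = map Fa (snd q)" using e unfolding pathmap_def by simp
    ultimately show ?thesis using map_Fa_inj by blast
  qed
  ultimately show "p = q" by (simp add: prod_eq_iff)
qed

lemma pm_surj: "is_path G' p' \<Longrightarrow> \<exists>p. is_path G p \<and> pathmap fh p = p'"
proof -
  assume p': "is_path G' p'"
  then obtain v where v: "v \<in> QV G" "fst p' = fh ` v" using QV' unfolding is_path_def by auto
  then obtain as where "pathfrom G v as" "map Fa as = snd p'"
    using path_bwd[of v "snd p'"] p' QV_sub unfolding is_path_def by auto
  then show ?thesis using v unfolding is_path_def pathmap_def by (intro exI[of _ "(v, as)"]) (auto simp: prod_eq_iff)
qed

abbreviation T where "T \<equiv> induced G G' fh"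

lemma T_pm: "is_path G p \<Longrightarrow> T f (pathmap fh p) = f p"
  unfolding induced_def using is_path_fwd pm_inj by (simp add: inv_into_f_f)

lemma T_np: "\<not> is_path G' p' \<Longrightarrow> T f p' = 0"
  unfolding induced_def by simp

lemma T_ext:
  assumes img: "\<And>p. is_path G p \<Longrightarrow> f' (pathmap fh p) = g' (pathmap fh p)"
    and non: "\<And>p'. \<not> is_path G' p' \<Longrightarrow> f' p' = g' p'"
  shows "f' = g'"
proof
  fix p' show "f' p' = g' p'"
  proof (cases "is_path G' p'")
    case True
    then obtain p where "is_path G p" "pathmap fh p = p'" using pm_surj by blast
    then show ?thesis using img[of p] by simp
  qed (rule non)
qed

lemma T_basis:
  assumes p: "is_path G p" shows "T (basis p) = basis (pathmap fh p)"
proof (rule T_ext)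
  fix p0 assume p0: "is_path G p0"
  have "pathmap fh p0 = pathmap fh p \<longleftrightarrow> p0 = p" using inj_on_eq_iff[OF pm_inj] p p0 by simp
  then show "T (basis p) (pathmap fh p0) = basis (pathmap fh p) (pathmap fh p0)"
    using p0 by (simp add: T_pm basis_def)
next
  fix p' assume "\<not> is_path G' p'"
  then show "T (basis p) p' = basis (pathmap fh p) p'" using is_path_fwd[OF p] by (auto simp: T_np basis_def)
qed

lemma T_zero: "T (\<lambda>_. 0) = (\<lambda>_. 0)"
  by (rule T_ext) (auto simp: T_pm T_np)

lemma T_add: "T (\<lambda>p. x p + y p) = (\<lambda>p. T x p + T y p)"
  by (rule T_ext) (auto simp: T_pm T_np)

lemma T_lin: "T (\<lambda>p. a * x p - b * y p) = (\<lambda>p. a * T x p - b * T y p)"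
  by (rule T_ext) (auto simp: T_pm T_np)

lemma T_smul: "T (\<lambda>p. a * x p) = (\<lambda>p. a * T x p)"
  by (rule T_ext) (auto simp: T_pm T_np)

lemma T_KQ: "x \<in> KQ G \<Longrightarrow> T x \<in> KQ G'"
proof -
  assume x: "x \<in> KQ G"
  have "{p'. T x p' \<noteq> 0} \<subseteq> pathmap fh ` {p. x p \<noteq> 0}"
  proof
    fix p' assume "p' \<in> {p'. T x p' \<noteq> 0}"
    then have nz: "T x p' \<noteq> 0" by simp
    then have "is_path G' p'" using T_np by blast
    then obtain p where "is_path G p" "pathmap fh p = p'" using pm_surj by blast
    moreover then have "x p \<noteq> 0" using nz T_pm by metis
    ultimately show "p' \<in> pathmap fh ` {p. x p \<noteq> 0}" by blast
  qed
  moreover have "finite {p. x p \<noteq> 0}" using x by (simp add: KQ_def)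
  ultimately have "finite {p'. T x p' \<noteq> 0}" by (meson finite_imageI finite_subset)
  moreover have "\<forall>p'. T x p' \<noteq> 0 \<longrightarrow> is_path G' p'" using T_np by blast
  ultimately show ?thesis by (simp add: KQ_def)
qed

lemma T_surjKQ: "x' \<in> KQ G' \<Longrightarrow> \<exists>x\<in>KQ G. T x = x'"
proof -
  assume x': "x' \<in> KQ G'"
  define x where "x = (\<lambda>p. if is_path G p then x' (pathmap fh p) else 0)"
  have "{p. x p \<noteq> 0} \<subseteq> pathmap fh -` {p'. x' p' \<noteq> 0} \<inter> {p. is_path G p}"
    unfolding x_def by auto
  moreover have "finite (pathmap fh -` {p'. x' p' \<noteq> 0} \<inter> {p. is_path G p})"
  proof (rule finite_vimage_IntI)
    show "finite {p'. x' p' \<noteq> 0}" using x' by (simp add: KQ_def)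
  qed (rule pm_inj)
  ultimately have "finite {p. x p \<noteq> 0}" by (rule finite_subset)
  moreover have "\<forall>p. x p \<noteq> 0 \<longrightarrow> is_path G p" unfolding x_def by simp
  ultimately have "x \<in> KQ G" by (simp add: KQ_def)
  moreover have "T x = x'"
  proof (rule T_ext)
    fix p assume "is_path G p"
    then show "T x (pathmap fh p) = x' (pathmap fh p)" by (simp add: T_pm x_def)
  next
    fix p' assume np: "\<not> is_path G' p'"
    then have "x' p' = 0" using x' unfolding KQ_def by blast
    then show "T x p' = x' p'" using T_np[OF np] by simp
  qed
  ultimately show ?thesis by blast
qed

text \<open>T is multiplicative, because pathmap commutes with splitting a path.\<close>
lemma T_mul_path:
  assumes p: "is_path G (v, as)"
  shows "pmul G' (T x) (T y) (pathmap fh (v, as)) = pmul G x y (v, as)"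
proof -
  have pf: "pathfrom G v as" "v \<in> QV G" using p by (simp_all add: is_path_def)
  have pre: "pathfrom G v (take k as)" and suf: "pathfrom G (pend G v (take k as)) (drop k as)" for k
    using pf(1) pathfrom_append[of G v "take k as" "drop k as"] by auto
  have split: "T x (fh ` v, take k (map Fa as)) *
      T y (pend G' (fh ` v) (take k (map Fa as)), drop k (map Fa as))
      = x (v, take k as) * y (pend G v (take k as), drop k as)" for k
  proof -
    have "(fh ` v, take k (map Fa as)) = pathmap fh (v, take k as)"
      by (simp add: pathmap_def take_map)
    moreover have "(pend G' (fh ` v) (take k (map Fa as)), drop k (map Fa as)) =
        pathmap fh (pend G v (take k as), drop k as)"
      using pend'[OF pre[of k]] by (simp add: pathmap_def take_map drop_map)
    moreover have "is_path G (v, take k as)" "is_path G (pend G v (take k as), drop k as)"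
      using pre suf pend_QV[OF pre pf(2)] pf(2) by (simp_all add: is_path_def)
    ultimately show ?thesis by (simp add: T_pm)
  qed
  show ?thesis unfolding pathmap_def fst_conv snd_conv pmul_app length_map split ..
qed

lemma T_mul: "T (pmul G x y) = pmul G' (T x) (T y)"
proof (rule T_ext)
  fix p assume p: "is_path G p"
  then show "T (pmul G x y) (pathmap fh p) = pmul G' (T x) (T y) (pathmap fh p)"
    using T_mul_path[of "fst p" "snd p" x y] by (simp add: T_pm)
next
  fix p' assume np: "\<not> is_path G' p'"
  obtain v as where pv: "p' = (v, as)" by (cases p')
  have zero: "T x (v, take k as) * T y (pend G' v (take k as), drop k as) = 0" for k
  proof (rule ccontr)
    assume "T x (v, take k as) * T y (pend G' v (take k as), drop k as) \<noteq> 0"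
    then have "is_path G' (v, take k as)" "is_path G' (pend G' v (take k as), drop k as)"
      using T_np by (metis mult_eq_0_iff)+
    then have "is_path G' (v, as)" unfolding is_path_def
      using pathfrom_append[of G' v "take k as" "drop k as"] by simp
    then show False using np pv by simp
  qed
  have "pmul G' (T x) (T y) p' = 0" unfolding pv pmul_app by (intro sum.neutral ballI zero)
  then show "T (pmul G x y) p' = pmul G' (T x) (T y) p'" using T_np[OF np] by simp
qed

text \<open>Since T is additive and multiplicative, it maps the ideal generated by S into the
  ideal generated by S' once it maps the generators there.\<close>
lemma ideal_image_sub:
  assumes fwd: "\<forall>s\<in>S. T s \<in> ideal_gen G' S'" and w: "w \<in> ideal_gen G S"
  shows "T w \<in> ideal_gen G' S'"
  using w
proof (induction rule: ideal_gen.induct)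
  case (gen s) then show ?case using fwd by blast
next
  case zero then show ?case by (simp add: T_zero ideal_gen.zero)
next
  case (add x y) then show ?case unfolding T_add by (intro ideal_gen.add) simp_all
next
  case (lmul x y) then show ?case unfolding T_mul by (intro ideal_gen.lmul T_KQ)
next
  case (rmul x y) then show ?case unfolding T_mul by (intro ideal_gen.rmul T_KQ)
qed

text \<open>Since T is moreover onto KQ_G', every element of the ideal generated by S' is hit,
  once the generators in S' are.\<close>
lemma ideal_image_sup:
  assumes bwd: "\<forall>s'\<in>S'. \<exists>w\<in>ideal_gen G S. T w = s'" and z: "z \<in> ideal_gen G' S'"
  shows "z \<in> T ` ideal_gen G S"
  using z
proof (induction rule: ideal_gen.induct)
  case (gen s)
  then obtain w where "w \<in> ideal_gen G S" "T w = s" using bwd by blast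
  then show ?case by (metis image_eqI)
next
  case zero
  show ?case using imageI[OF ideal_gen.zero, of T G S] unfolding T_zero .
next
  case (add x y)
  then obtain u w where uw: "u \<in> ideal_gen G S" "w \<in> ideal_gen G S" "x = T u" "y = T w" by blast
  show ?case using imageI[OF ideal_gen.add[OF uw(1,2)], of T] unfolding T_add uw .
next
  case (lmul x y)
  then obtain u w where uw: "u \<in> KQ G" "w \<in> ideal_gen G S" "x = T u" "y = T w" using T_surjKQ by blast
  show ?case using imageI[OF ideal_gen.lmul[OF uw(1,2)], of T] unfolding T_mul uw .
next
  case (rmul x y)
  then obtain u w where uw: "w \<in> KQ G" "u \<in> ideal_gen G S" "x = T u" "y = T w" using T_surjKQ by blast
  show ?case using imageI[OF ideal_gen.rmul[OF uw(2,1)], of T] unfolding T_mul uw .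
qed

lemma ideal_transport:
  assumes "\<forall>s\<in>S. T s \<in> ideal_gen G' S'" "\<forall>s'\<in>S'. \<exists>w\<in>ideal_gen G S. T w = s'"
  shows "T ` ideal_gen G S = ideal_gen G' S'"
  using ideal_image_sub[OF assms(1)] ideal_image_sup[OF assms(2)] by blast

lemma Cyc_path_gen:
  assumes ns: "\<not> special G"
  shows "x \<in> Hs G \<Longrightarrow> \<not> truncated G x \<Longrightarrow>
    pathfrom G (edge G x) (map (\<lambda>r. Arr ((succ G ^^ r) x)) [0..<n]) \<and>
    pend G (edge G x) (map (\<lambda>r. Arr ((succ G ^^ r) x)) [0..<n]) = edge G ((succ G ^^ n) x)"
proof (induction n arbitrary: x)
  case (Suc n)
  have sx: "succ G x \<in> Hs G" "\<not> truncated G (succ G x)"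
    using Suc.prems bg_basic[OF G] by (auto simp: truncated_def)
  have eq: "map (\<lambda>r. Arr ((succ G ^^ r) x)) [0..<Suc n] =
      Arr x # map (\<lambda>r. Arr ((succ G ^^ r) (succ G x))) [0..<n]"
    unfolding map_upt_Suc by (simp add: funpow_Suc_right del: funpow.simps)
  have qa: "Arr x \<in> QA G" using ns Suc.prems by (simp add: QA_def)
  show ?case unfolding eq using Suc.IH[OF sx] qa
    by (simp add: funpow_Suc_right del: funpow.simps)
qed simp

lemma CycPow_path:
  assumes ns: "\<not> special G" and h: "h \<in> Hs G" and nt: "\<not> truncated G h"
  shows "pathfrom G (edge G h) (CycPow G h) \<and> pend G (edge G h) (CycPow G h) = edge G h"
proof -
  have "(succ G ^^ val G (ends G h)) h = h" using bg_cycle(1)[OF G h] by simp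
  then have "pathfrom G (edge G h) (Cyc G h) \<and> pend G (edge G h) (Cyc G h) = edge G h"
    using Cyc_path_gen[OF ns h nt, of "val G (ends G h)"] unfolding Cyc_def by simp
  then show ?thesis unfolding CycPow_def by (rule pathfrom_pow)
qed

lemma Cyc_ok: "k \<in> Hs G \<Longrightarrow> \<forall>a\<in>set (Cyc G k). okarr G a"
  unfolding Cyc_def okarr_def using funpow_succ_Hs[OF G] by auto

lemma Cyc': "h \<in> Hs G \<Longrightarrow> Cyc G' (fh h) = map Fa (Cyc G h)"
  unfolding Cyc_def using comp val' bg_basic[OF G] succ_pow by simp

lemma CycPow': "h \<in> Hs G \<Longrightarrow> CycPow G' (fh h) = map Fa (CycPow G h)"
  unfolding CycPow_def using Cyc' comp multc bg_basic[OF G] by (simp add: map_concat)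

lemma Cyc_sub_Fa:
  assumes k: "k \<in> Hs G" and ab: "okarr G a" "okarr G b"
  shows "(\<exists>xs ys. Cyc G' (fh k) = xs @ [Fa a, Fa b] @ ys) \<longleftrightarrow> (\<exists>xs ys. Cyc G k = xs @ [a, b] @ ys)"
proof
  assume "\<exists>xs ys. Cyc G' (fh k) = xs @ [Fa a, Fa b] @ ys"
  then obtain xs ys where e: "map Fa (Cyc G k) = xs @ [Fa a, Fa b] @ ys" using Cyc'[OF k] by auto
  then obtain us vs where uv: "Cyc G k = us @ vs" "[Fa a, Fa b] @ ys = map Fa vs"
    unfolding map_eq_append_conv by metis
  then obtain c d zs where cdz: "vs = c # d # zs" "Fa c = Fa a" "Fa d = Fa b"
    by (auto simp: map_eq_Cons_conv)
  have "okarr G c" "okarr G d" using Cyc_ok[OF k] uv(1) cdz(1) by auto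
  then have "c = a" "d = b" using Fa_inj ab cdz(2,3) by blast+
  then show "\<exists>xs ys. Cyc G k = xs @ [a, b] @ ys" using uv(1) cdz(1) by auto
next
  assume "\<exists>xs ys. Cyc G k = xs @ [a, b] @ ys"
  then obtain xs ys where "Cyc G k = xs @ [a, b] @ ys" by blast
  then have "Cyc G' (fh k) = map Fa xs @ [Fa a, Fa b] @ map Fa ys" using Cyc'[OF k] by simp
  then show "\<exists>xs ys. Cyc G' (fh k) = xs @ [Fa a, Fa b] @ ys" by blast
qed

lemma rel1_path:
  assumes ns: "\<not> special G" and h: "h \<in> Hs G" and nt: "nontrunc_edge G h"
  shows "is_path G (edge G h, CycPow G h)" "is_path G (edge G h, CycPow G (opp G h))"
proof -
  have oh: "opp G h \<in> Hs G" using bg_basic[OF G h] by simp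
  have "pathfrom G (edge G h) (CycPow G h)" using CycPow_path[OF ns h] nt by (simp add: nontrunc_edge_def)
  moreover have "pathfrom G (edge G (opp G h)) (CycPow G (opp G h))"
    using CycPow_path[OF ns oh] nt by (simp add: nontrunc_edge_def)
  ultimately show "is_path G (edge G h, CycPow G h)" "is_path G (edge G h, CycPow G (opp G h))"
    using edge_QV[OF h] edge_opp[OF h] by (simp_all add: is_path_def)
qed

lemma T_rel1:
  assumes ns: "\<not> special G" and h: "h \<in> Hs G" and nt: "nontrunc_edge G h"
  shows "T (rel1 G q h) = (\<lambda>p. q h * basis (edge G' (fh h), CycPow G' (fh h)) p
      - q (opp G h) * basis (edge G' (fh h), CycPow G' (opp G' (fh h))) p)"
proof -
  have oh: "opp G h \<in> Hs G" using bg_basic[OF G h] by simp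
  note p = rel1_path[OF ns h nt]
  have e1: "pathmap fh (edge G h, CycPow G h) = (edge G' (fh h), CycPow G' (fh h))"
    unfolding pathmap_def using edge'[OF h] CycPow'[OF h] by simp
  have e2: "pathmap fh (edge G h, CycPow G (opp G h)) = (edge G' (fh h), CycPow G' (opp G' (fh h)))"
    unfolding pathmap_def using edge'[OF h] CycPow'[OF oh] comp[OF h] by simp
  show ?thesis unfolding rel1_def T_lin T_basis[OF p(1)] T_basis[OF p(2)] e1 e2 ..
qed

lemma rel1_scale:
  assumes h: "h \<in> Hs G" and ns: "\<not> special G" and nt: "nontrunc_edge G h"
    and qh: "q h \<noteq> 0" and rel: "q' (fh h) * q (opp G h) = q' (fh (opp G h)) * q h"
  shows "rel1 G' q' (fh h) = (\<lambda>p. (q' (fh h) / q h) * T (rel1 G q h) p)"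
proof -
  have e: "q' (fh (opp G h)) = q' (fh h) / q h * q (opp G h)" using rel qh by (simp add: field_simps)
  have o: "opp G' (fh h) = fh (opp G h)" using comp[OF h] by simp
  show ?thesis unfolding T_rel1[OF ns h nt] unfolding rel1_def o e using qh by (simp add: algebra_simps)
qed

lemma T_rel2:
  assumes ns: "\<not> special G" and h: "h \<in> Hs G" and t: "truncated G h"
  shows "T (rel2 G h) = rel2 G' (fh h)"
proof -
  have oh: "opp G h \<in> Hs G" using bg_basic[OF G h] by simp
  have nt: "\<not> truncated G (opp G h)" using both_trunc_special[OF G h t] ns by blast
  have "pathfrom G (edge G (opp G h)) (CycPow G (opp G h)) \<and>
      pend G (edge G (opp G h)) (CycPow G (opp G h)) = edge G (opp G h)"
    by (rule CycPow_path[OF ns oh nt])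
  moreover have "Arr (opp G h) \<in> QA G" using ns oh nt by (simp add: QA_def)
  ultimately have p: "is_path G (edge G h, CycPow G (opp G h) @ [Arr (opp G h)])"
    using edge_QV[OF h] edge_opp[OF h] by (simp add: is_path_def pathfrom_append)
  have "pathmap fh (edge G h, CycPow G (opp G h) @ [Arr (opp G h)]) =
      (edge G' (fh h), CycPow G' (opp G' (fh h)) @ [Arr (opp G' (fh h))])"
    unfolding pathmap_def using edge'[OF h] CycPow'[OF oh] comp[OF h] by simp
  then show ?thesis unfolding rel2_def using T_basis[OF p] by simp
qed

lemma zero_pair_iff:
  assumes a: "a \<in> QA G" and b: "b \<in> QA G"
  shows "zero_pair G' (Fa a) (Fa b) \<longleftrightarrow> zero_pair G a b"
proof -
  have 1: "Fa a \<in> QA G' \<and> Fa b \<in> QA G'" using a b QA' by auto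
  have 2: "tgt G' (Fa a) = src G' (Fa b) \<longleftrightarrow> tgt G a = src G b"
    using tgt'[OF a] src'[OF b] inj_on_image_eq_iff[OF injh tgt_sub[OF a] src_sub[OF b]] by simp
  have 3: "(\<exists>k'\<in>Hs G'. \<not> truncated G' k' \<and> (\<exists>xs ys. Cyc G' k' = xs @ [Fa a, Fa b] @ ys)) \<longleftrightarrow>
      (\<exists>k\<in>Hs G. \<not> truncated G k \<and> (\<exists>xs ys. Cyc G k = xs @ [a, b] @ ys))"
    (is "?L \<longleftrightarrow> ?R")
  proof
    assume ?L
    then obtain k where k: "k \<in> Hs G" "\<not> truncated G' (fh k)"
      "\<exists>xs ys. Cyc G' (fh k) = xs @ [Fa a, Fa b] @ ys" unfolding Hs' by blast
    then show ?R using Cyc_sub_Fa[OF k(1) QA_ok[OF a] QA_ok[OF b]] trunc'[OF k(1)] by blast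
  next
    assume ?R
    then obtain k where k: "k \<in> Hs G" "\<not> truncated G k" "\<exists>xs ys. Cyc G k = xs @ [a, b] @ ys"
      by blast
    then show ?L using Cyc_sub_Fa[OF k(1) QA_ok[OF a] QA_ok[OF b]] trunc'[OF k(1)] Hs' by blast
  qed
  show ?thesis unfolding zero_pair_def using 1 2 3 a b by simp
qed

lemma T_rel3: "zero_pair G a b \<Longrightarrow> T (basis (src G a, [a, b])) = basis (src G' (Fa a), [Fa a, Fa b])"
proof -
  assume c: "zero_pair G a b"
  then have a: "a \<in> QA G" and p: "is_path G (src G a, [a, b])"
    unfolding zero_pair_def is_path_def using src_QV by auto
  have "pathmap fh (src G a, [a, b]) = (src G' (Fa a), [Fa a, Fa b])"
    unfolding pathmap_def using src'[OF a] by simp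
  then show ?thesis using T_basis[OF p] by simp
qed

lemma T_special: "special G \<Longrightarrow> T (basis (Hs G, [X, X])) = basis (Hs G', [X, X])"
proof -
  assume sp: "special G"
  have "is_path G (Hs G, [X, X])" using sp QV_special by (simp add: is_path_def QA_def)
  moreover have "pathmap fh (Hs G, [X, X]) = (Hs G', [X, X])" by (simp add: pathmap_def Hs')
  ultimately show ?thesis using T_basis by metis
qed

definition q_compat :: "('h \<Rightarrow> 'k::field) \<Rightarrow> ('e \<Rightarrow> 'k) \<Rightarrow> bool" where
  "q_compat q q' \<longleftrightarrow> (\<forall>h\<in>Hs G. nontrunc_edge G h \<longrightarrow> q h \<noteq> 0 \<and> q' (fh h) \<noteq> 0 \<and>
      q' (fh h) * q (opp G h) = q' (fh (opp G h)) * q h)"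

lemma rels_fwd:
  assumes Q: "q_compat q q'" and ns: "\<not> special G" and s: "s \<in> rels G q"
  shows "T s \<in> ideal_gen G' (rels G' q')"
proof -
  have ns': "\<not> special G'" using ns special' by simp
  have r': "rels G' q' = rels1 G' q' \<union> rels2 G' \<union> rels3 G'" using ns' by (simp add: rels_def)
  from s ns consider (1) h where "h \<in> Hs G" "nontrunc_edge G h" "s = rel1 G q h"
    | (2) h where "h \<in> Hs G" "truncated G h" "s = rel2 G h"
    | (3) a b where "zero_pair G a b" "s = basis (src G a, [a, b])"
    unfolding rels_def rels1_alt rels2_alt rels3_alt by auto
  then show ?thesis
  proof cases
    case 1
    have qq: "q h \<noteq> 0" "q' (fh h) \<noteq> 0" "q' (fh h) * q (opp G h) = q' (fh (opp G h)) * q h"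
      using Q 1 by (auto simp: q_compat_def)
    have mem: "rel1 G' q' (fh h) \<in> rels G' q'"
      unfolding r' rels1_alt using 1 nontrunc' Hs' by blast
    have "T s = (\<lambda>p. inverse (q' (fh h) / q h) * rel1 G' q' (fh h) p)"
      unfolding rel1_scale[OF 1(1) ns 1(2) qq(1) qq(3)] 1(3) using qq by (simp add: field_simps)
    moreover have "edge G' (fh h) \<in> QV G'" using 1 Hs' by (simp add: QV_def Edges_def)
    ultimately show ?thesis using smul_gen[OF mem] rel1_supp by metis
  next
    case 2
    have "rel2 G' (fh h) \<in> rels G' q'" unfolding r' rels2_alt using 2 trunc' Hs' by blast
    then show ?thesis using T_rel2[OF ns 2(1,2)] 2(3) ideal_gen.gen by metis
  next
    case 3
    have ab: "a \<in> QA G" "b \<in> QA G" using 3 by (simp_all add: zero_pair_def)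
    have "basis (src G' (Fa a), [Fa a, Fa b]) \<in> rels G' q'"
      unfolding r' rels3_alt using 3 zero_pair_iff[OF ab] by blast
    then show ?thesis using T_rel3[OF 3(1)] 3(2) ideal_gen.gen by metis
  qed
qed

lemma rels_bwd:
  assumes Q: "q_compat q q'" and ns: "\<not> special G" and s': "s' \<in> rels G' q'"
  shows "\<exists>w\<in>ideal_gen G (rels G q). T w = s'"
proof -
  have ns': "\<not> special G'" using ns special' by simp
  have r: "rels G q = rels1 G q \<union> rels2 G \<union> rels3 G" using ns by (simp add: rels_def)
  from s' ns' consider (1) h' where "h' \<in> Hs G'" "nontrunc_edge G' h'" "s' = rel1 G' q' h'"
    | (2) h' where "h' \<in> Hs G'" "truncated G' h'" "s' = rel2 G' h'"
    | (3) a' b' where "zero_pair G' a' b'" "s' = basis (src G' a', [a', b'])"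
    unfolding rels_def rels1_alt rels2_alt rels3_alt by auto
  then show ?thesis
  proof cases
    case 1
    obtain h where h: "h \<in> Hs G" "h' = fh h" using 1(1) Hs' by blast
    have nt: "nontrunc_edge G h" using 1(2) h nontrunc' by simp
    have qq: "q h \<noteq> 0" "q' (fh h) * q (opp G h) = q' (fh (opp G h)) * q h"
      using Q h nt by (auto simp: q_compat_def)
    have mem: "rel1 G q h \<in> rels G q" unfolding r rels1_alt using h nt by blast
    have "(\<lambda>p. (q' (fh h) / q h) * rel1 G q h p) \<in> ideal_gen G (rels G q)"
      using smul_gen[OF mem edge_QV[OF h(1)]] rel1_supp by metis
    moreover have "T (\<lambda>p. (q' (fh h) / q h) * rel1 G q h p) = s'"
      unfolding T_smul 1(3) h(2) rel1_scale[OF h(1) ns nt qq] ..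
    ultimately show ?thesis by blast
  next
    case 2
    obtain h where h: "h \<in> Hs G" "h' = fh h" using 2(1) Hs' by blast
    have t: "truncated G h" using 2(2) h trunc' by simp
    have "rel2 G h \<in> rels G q" unfolding r rels2_alt using h t by blast
    then show ?thesis using T_rel2[OF ns h(1) t] 2(3) h(2) by (metis ideal_gen.gen)
  next
    case 3
    have ab': "a' \<in> QA G'" "b' \<in> QA G'" using 3 by (simp_all add: zero_pair_def)
    obtain a b where ab: "a \<in> QA G" "b \<in> QA G" "a' = Fa a" "b' = Fa b" using ab' QA' by blast
    have c: "zero_pair G a b" using zero_pair_iff[OF ab(1,2)] 3(1) ab by simp
    have "basis (src G a, [a, b]) \<in> rels G q" unfolding r rels3_alt using c by blast
    then show ?thesis using T_rel3[OF c] 3(2) ab by (metis ideal_gen.gen)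
  qed
qed

lemma IGamma_transport:
  assumes Q: "q_compat q q'"
  shows "T ` IGamma G q = IGamma G' q'"
  unfolding IGamma_def
proof (rule ideal_transport)
  show "\<forall>s\<in>rels G q. T s \<in> ideal_gen G' (rels G' q')"
  proof (cases "special G")
    case True
    then have "rels G q = {basis (Hs G, [X, X])}" "rels G' q' = {basis (Hs G', [X, X])}"
      using special' by (simp_all add: rels_def)
    then show ?thesis using T_special[OF True] by (auto intro: ideal_gen.gen)
  qed (use rels_fwd[OF Q] in blast)
  show "\<forall>s'\<in>rels G' q'. \<exists>w\<in>ideal_gen G (rels G q). T w = s'"
  proof (cases "special G")
    case True
    then have "rels G q = {basis (Hs G, [X, X])}" "rels G' q' = {basis (Hs G', [X, X])}"
      using special' by (simp_all add: rels_def)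
    then show ?thesis using T_special[OF True] by (auto intro: ideal_gen.gen)
  qed (use rels_bwd[OF Q] in blast)
qed

end

lemma qiso_transport:
  assumes "is_bgraph G" "bgiso G G' fv fh" "bgraph_iso.q_compat G fh q q'"
  shows "qiso G q G' q' fv fh"
proof -
  interpret bgraph_iso G G' fv fh using assms(1,2) by unfold_locales
  show ?thesis unfolding qiso_def using assms(2) IGamma_transport[OF assms(3)] by simp
qed

section \<open>Free Brauer actions\<close>

locale free_action =
  fixes \<Gamma> :: "('v, 'h) bgraph" and av :: "'g::{finite, ab_group_add} \<Rightarrow> 'v \<Rightarrow> 'v"
    and ah :: "'g \<Rightarrow> 'h \<Rightarrow> 'h" and rep :: "'h set \<Rightarrow> 'h"
  assumes G: "is_bgraph \<Gamma>" and fa: "free_brauer_action \<Gamma> av ah" and vr: "valid_rep \<Gamma> av ah rep"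
begin

lemma ba: "brauer_action \<Gamma> av ah" using fa by (simp add: free_brauer_action_def)

lemma av0: "\<mu> \<in> Vs \<Gamma> \<Longrightarrow> av 0 \<mu> = \<mu>"
  and ah0: "h \<in> Hs \<Gamma> \<Longrightarrow> ah 0 h = h"
  and av_add: "\<mu> \<in> Vs \<Gamma> \<Longrightarrow> av (g + g') \<mu> = av g (av g' \<mu>)"
  and ah_add: "h \<in> Hs \<Gamma> \<Longrightarrow> ah (g + g') h = ah g (ah g' h)"
  and av_mult: "\<mu> \<in> Vs \<Gamma> \<Longrightarrow> mult \<Gamma> (av g \<mu>) = mult \<Gamma> \<mu>"
  and ah_Hs: "h \<in> Hs \<Gamma> \<Longrightarrow> ah g h \<in> Hs \<Gamma>"
  and ah_ends: "h \<in> Hs \<Gamma> \<Longrightarrow> ends \<Gamma> (ah g h) = av g (ends \<Gamma> h)"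
  and ah_opp: "h \<in> Hs \<Gamma> \<Longrightarrow> opp \<Gamma> (ah g h) = ah g (opp \<Gamma> h)"
  and ah_succ: "h \<in> Hs \<Gamma> \<Longrightarrow> succ \<Gamma> (ah g h) = ah g (succ \<Gamma> h)"
  using ba by (simp_all add: brauer_action_def)

lemma ah_inv: "h \<in> Hs \<Gamma> \<Longrightarrow> ah (- g) (ah g h) = h"
  using ah_add[of h "- g" g] ah0 by simp

lemma av_inv: "\<mu> \<in> Vs \<Gamma> \<Longrightarrow> av (- g) (av g \<mu>) = \<mu>"
  using av_add[of \<mu> "- g" g] av0 by simp

lemma ah_fix: "h \<in> Hs \<Gamma> \<Longrightarrow> ah g h = h \<Longrightarrow> g = 0"
proof -
  assume h: "h \<in> Hs \<Gamma>" and e: "ah g h = h"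
  have "ah g (opp \<Gamma> h) = opp \<Gamma> h" using ah_opp[OF h, of g] e by simp
  then have "ah g ` edge \<Gamma> h = edge \<Gamma> h" using e by (simp add: edge_def)
  then show "g = 0" using fa h unfolding free_brauer_action_def by blast
qed

lemma ah_cancel: "h \<in> Hs \<Gamma> \<Longrightarrow> ah g h = ah g' h \<Longrightarrow> g = g'"
proof -
  assume h: "h \<in> Hs \<Gamma>" and e: "ah g h = ah g' h"
  have "ah (g - g') (ah g' h) = ah g' h" using ah_add[OF h, of "g - g'" g'] e by simp
  then have "g - g' = 0" using ah_fix ah_Hs[OF h] by blast
  then show ?thesis by simp
qed

lemma ah_inj: "h \<in> Hs \<Gamma> \<Longrightarrow> h' \<in> Hs \<Gamma> \<Longrightarrow> ah g h = ah g h' \<Longrightarrow> h = h'"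
  by (metis ah_inv)

lemma succ_pow_act: "h \<in> Hs \<Gamma> \<Longrightarrow> (succ \<Gamma> ^^ n) (ah g h) = ah g ((succ \<Gamma> ^^ n) h)"
  by (induction n) (simp_all add: ah_succ funpow_succ_Hs[OF G])

lemma val_act: "\<nu> \<in> Vs \<Gamma> \<Longrightarrow> val \<Gamma> (av g \<nu>) = val \<Gamma> \<nu>"
proof -
  assume v: "\<nu> \<in> Vs \<Gamma>"
  have "atv \<Gamma> (av g \<nu>) = ah g ` atv \<Gamma> \<nu>"
  proof
    show "ah g ` atv \<Gamma> \<nu> \<subseteq> atv \<Gamma> (av g \<nu>)" using ah_Hs ah_ends by (auto simp: atv_def)
    show "atv \<Gamma> (av g \<nu>) \<subseteq> ah g ` atv \<Gamma> \<nu>"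
    proof
      fix x assume "x \<in> atv \<Gamma> (av g \<nu>)"
      then have x: "x \<in> Hs \<Gamma>" "ends \<Gamma> x = av g \<nu>" by (auto simp: atv_def)
      have "ah (- g) x \<in> atv \<Gamma> \<nu>" using x ah_Hs ah_ends av_inv[OF v] by (simp add: atv_def)
      moreover have "x = ah g (ah (- g) x)" using ah_inv[OF x(1), of "- g"] by simp
      ultimately show "x \<in> ah g ` atv \<Gamma> \<nu>" by blast
    qed
  qed
  moreover have "inj_on (ah g) (atv \<Gamma> \<nu>)" by (rule inj_onI) (auto simp: atv_def intro: ah_inj)
  ultimately show ?thesis unfolding val_def by (simp add: card_image)
qed

abbreviation Oh where "Oh \<equiv> orb ah"
abbreviation og where "og \<equiv> orbit_graph \<Gamma> av ah"
abbreviation W where "W \<equiv> assoc_weighting \<Gamma> av ah rep"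

lemma orb_mem: "y \<in> orb a x \<longleftrightarrow> (\<exists>g. y = a g x)" by (auto simp: orb_def)

lemma orb_self: "h \<in> Hs \<Gamma> \<Longrightarrow> h \<in> Oh h" using ah0 by (metis orb_mem)
lemma orbv_self: "\<mu> \<in> Vs \<Gamma> \<Longrightarrow> \<mu> \<in> orb av \<mu>" using av0 by (metis orb_mem)

lemma orb_sub: "h \<in> Hs \<Gamma> \<Longrightarrow> Oh h \<subseteq> Hs \<Gamma>" using ah_Hs by (auto simp: orb_mem)

lemma orb_act: "h \<in> Hs \<Gamma> \<Longrightarrow> Oh (ah a h) = Oh h"
  unfolding orb_mem set_eq_iff using ah_add[of h _ a] ah_add[of h _ "- a"] ah_inv
  by (metis add.commute diff_add_cancel diff_conv_add_uminus)

lemma orbv_act: "\<mu> \<in> Vs \<Gamma> \<Longrightarrow> orb av (av a \<mu>) = orb av \<mu>"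
  unfolding orb_mem set_eq_iff using av_add[of \<mu> _ a] av_add[of \<mu> _ "- a"] av_inv
  by (metis add.commute diff_add_cancel diff_conv_add_uminus)

lemma orb_in_eq: "h \<in> Hs \<Gamma> \<Longrightarrow> x \<in> Oh h \<Longrightarrow> Oh x = Oh h"
  using orb_act by (auto simp: orb_mem)

lemma some_O: "h \<in> Hs \<Gamma> \<Longrightarrow> \<exists>a. (SOME x. x \<in> Oh h) = ah a h"
  using someI[of "\<lambda>x. x \<in> Oh h", OF orb_self] by (simp add: orb_mem)

lemma og_Vs: "Vs og = orb av ` Vs \<Gamma>"
  and og_Hs: "Hs og = Oh ` Hs \<Gamma>"
  and og_ends: "ends og Ob = orb av (ends \<Gamma> (SOME h. h \<in> Ob))"
  and og_opp: "opp og Ob = Oh (opp \<Gamma> (SOME h. h \<in> Ob))"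
  and og_succ: "succ og Ob = Oh (succ \<Gamma> (SOME h. h \<in> Ob))"
  by (simp_all add: orbit_graph_def orbit_graph0_def)

lemma og_mult: "mult og M = (let \<mu> = SOME \<mu>. \<mu> \<in> M in val \<Gamma> \<mu> * mult \<Gamma> \<mu> div val og M)"
  by (simp add: orbit_graph_def orbit_graph0_def val_def atv_def)

lemma ends_O: "h \<in> Hs \<Gamma> \<Longrightarrow> ends og (Oh h) = orb av (ends \<Gamma> h)"
  using some_O og_ends ah_ends orbv_act bg_basic(1)[OF G] by metis

lemma opp_O: "h \<in> Hs \<Gamma> \<Longrightarrow> opp og (Oh h) = Oh (opp \<Gamma> h)"
  using some_O og_opp ah_opp orb_act bg_basic(2)[OF G] by metis

lemma succ_O: "h \<in> Hs \<Gamma> \<Longrightarrow> succ og (Oh h) = Oh (succ \<Gamma> h)"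
  using some_O og_succ ah_succ orb_act bg_basic(5)[OF G] by metis

lemma succ_O_pow: "h \<in> Hs \<Gamma> \<Longrightarrow> (succ og ^^ n) (Oh h) = Oh ((succ \<Gamma> ^^ n) h)"
  by (induction n) (auto simp: succ_O funpow_succ_Hs[OF G])

lemma Oh_in: "h \<in> Hs \<Gamma> \<Longrightarrow> Oh h \<in> atv og (orb av (ends \<Gamma> h))"
  using og_Hs ends_O by (simp add: atv_def)

lemma atv_og: "Ob \<in> atv og M \<Longrightarrow> \<exists>x. x \<in> Hs \<Gamma> \<and> Ob = Oh x \<and> orb av (ends \<Gamma> x) = M"
  using og_Hs ends_O by (auto simp: atv_def)

lemma og_succ_inj:
  assumes "h \<in> Hs \<Gamma>" "h' \<in> Hs \<Gamma>" "succ og (Oh h) = succ og (Oh h')"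
  shows "Oh h = Oh h'"
proof -
  have "succ \<Gamma> h' \<in> Oh (succ \<Gamma> h)"
    using assms succ_O orb_self[OF bg_basic(5)[OF G assms(2)]] by simp
  then obtain g where "succ \<Gamma> h' = succ \<Gamma> (ah g h)" using ah_succ[OF assms(1)] by (auto simp: orb_mem)
  then have "h' = ah g h" using inj_onD[OF bg_fin(3)[OF G]] assms ah_Hs by blast
  then show ?thesis using assms(1) orb_act by simp
qed

lemma og_cyc:
  assumes h: "h \<in> Hs \<Gamma>"
  shows "\<forall>n. ((succ og ^^ n) (Oh h) = Oh h) = (val og (orb av (ends \<Gamma> h)) dvd n)"
    "bij_betw (\<lambda>n. (succ og ^^ n) (Oh h)) {..<val og (orb av (ends \<Gamma> h))} (atv og (orb av (ends \<Gamma> h)))"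
proof -
  let ?M = "orb av (ends \<Gamma> h)"
  let ?A = "atv og ?M"
  have fin: "finite ?A" using bg_fin(1)[OF G] og_Hs by (auto simp: atv_def)
  have maps: "\<forall>y\<in>?A. succ og y \<in> ?A"
    using atv_og succ_O Oh_in bg_basic(5,6)[OF G] by metis
  have inj: "inj_on (succ og) ?A"
    by (rule inj_onI) (metis atv_og og_succ_inj)
  have cov: "\<forall>y\<in>?A. \<exists>n. (succ og ^^ n) (Oh h) = y"
  proof
    fix y assume "y \<in> ?A"
    then obtain x where x: "x \<in> Hs \<Gamma>" "y = Oh x" "orb av (ends \<Gamma> x) = ?M" using atv_og by blast
    have "ends \<Gamma> x \<in> ?M" using orbv_self bg_basic(1)[OF G] x by metis
    then obtain g where g: "ends \<Gamma> x = av g (ends \<Gamma> h)" by (auto simp: orb_mem)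
    let ?x = "ah (- g) x"
    have x': "?x \<in> Hs \<Gamma>" "ends \<Gamma> ?x = ends \<Gamma> h"
      using ah_Hs[OF x(1)] ah_ends[OF x(1)] g av_inv bg_basic(1)[OF G h] by auto
    obtain n where "(succ \<Gamma> ^^ n) h = ?x" using succ_reaches[OF G h x'] by blast
    then have "(succ og ^^ n) (Oh h) = Oh ?x" using succ_O_pow[OF h] by simp
    also have "\<dots> = y" using orb_act x by simp
    finally show "\<exists>n. (succ og ^^ n) (Oh h) = y" by blast
  qed
  show "\<forall>n. ((succ og ^^ n) (Oh h) = Oh h) = (val og ?M dvd n)"
    "bij_betw (\<lambda>n. (succ og ^^ n) (Oh h)) {..<val og ?M} ?A"
    using cycle_lemma[OF fin maps inj Oh_in[OF h] cov] by (simp_all add: val_def)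
qed

lemma rep_O: "h \<in> Hs \<Gamma> \<Longrightarrow> rep (Oh h) \<in> Oh h"
  and rep_opp: "h \<in> Hs \<Gamma> \<Longrightarrow> rep (opp og (Oh h)) = opp \<Gamma> (rep (Oh h))"
  using vr og_Hs by (auto simp: valid_rep_def)

lemma rep_H: "h \<in> Hs \<Gamma> \<Longrightarrow> rep (Oh h) \<in> Hs \<Gamma>"
  using rep_O orb_sub by blast

text \<open>By freeness every occurrence is a unique translate of the representative of its
  orbit; coord h is the translating group element.\<close>
definition coord :: "'h \<Rightarrow> 'g" where "coord h = (THE g. h = ah g (rep (Oh h)))"

lemma coord_ex1: "h \<in> Hs \<Gamma> \<Longrightarrow> \<exists>!g. h = ah g (rep (Oh h))"
proof -
  assume h: "h \<in> Hs \<Gamma>"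
  obtain b where "rep (Oh h) = ah b h" using rep_O[OF h] by (auto simp: orb_mem)
  then have e: "h = ah (- b) (rep (Oh h))" using ah_inv[OF h] by simp
  show ?thesis
  proof (rule ex1I[of _ "- b"])
    fix g assume "h = ah g (rep (Oh h))"
    then have "ah g (rep (Oh h)) = ah (- b) (rep (Oh h))" using e by simp
    then show "g = - b" by (rule ah_cancel[OF rep_H[OF h]])
  qed (rule e)
qed

lemma coord_prop: "h \<in> Hs \<Gamma> \<Longrightarrow> h = ah (coord h) (rep (Oh h))"
  unfolding coord_def by (rule theI'[OF coord_ex1])

lemma coord_uniq: "h \<in> Hs \<Gamma> \<Longrightarrow> h = ah g (rep (Oh h)) \<Longrightarrow> coord h = g"
  using coord_prop coord_ex1 by blast

lemma W_prop: "h \<in> Hs \<Gamma> \<Longrightarrow> succ \<Gamma> (rep (Oh h)) = ah (W (Oh h)) (rep (succ og (Oh h)))"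
proof -
  assume h: "h \<in> Hs \<Gamma>"
  let ?r = "rep (Oh h)"
  have r: "?r \<in> Hs \<Gamma>" using rep_H[OF h] .
  have "succ og (Oh h) = Oh (succ \<Gamma> ?r)" using succ_O[OF r] orb_in_eq[OF h rep_O[OF h]] by simp
  moreover have "succ \<Gamma> ?r \<in> Hs \<Gamma>" using bg_basic(5)[OF G r] .
  ultimately have "\<exists>!g. succ \<Gamma> ?r = ah g (rep (succ og (Oh h)))" using coord_ex1 by simp
  then show ?thesis unfolding assoc_weighting_def by (rule theI')
qed

lemma coord_succ: "h \<in> Hs \<Gamma> \<Longrightarrow> coord (succ \<Gamma> h) = coord h + W (Oh h)"
proof -
  assume h: "h \<in> Hs \<Gamma>"
  have sh: "succ \<Gamma> h \<in> Hs \<Gamma>" using bg_basic(5)[OF G h] .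
  have "succ \<Gamma> h = succ \<Gamma> (ah (coord h) (rep (Oh h)))" using coord_prop[OF h] by simp
  also have "\<dots> = ah (coord h) (succ \<Gamma> (rep (Oh h)))" using ah_succ[OF rep_H[OF h]] by simp
  also have "\<dots> = ah (coord h) (ah (W (Oh h)) (rep (Oh (succ \<Gamma> h))))" using W_prop[OF h] succ_O[OF h] by simp
  also have "\<dots> = ah (coord h + W (Oh h)) (rep (Oh (succ \<Gamma> h)))" using ah_add[OF rep_H[OF sh]] by simp
  finally show ?thesis by (rule coord_uniq[OF sh])
qed

lemma coord_opp: "h \<in> Hs \<Gamma> \<Longrightarrow> coord (opp \<Gamma> h) = coord h"
proof -
  assume h: "h \<in> Hs \<Gamma>"
  have "opp \<Gamma> h = opp \<Gamma> (ah (coord h) (rep (Oh h)))" using coord_prop[OF h] by simp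
  also have "\<dots> = ah (coord h) (opp \<Gamma> (rep (Oh h)))" using ah_opp[OF rep_H[OF h]] by simp
  also have "\<dots> = ah (coord h) (rep (Oh (opp \<Gamma> h)))" using rep_opp[OF h] opp_O[OF h] by simp
  finally show ?thesis by (rule coord_uniq[OF bg_basic(2)[OF G h]])
qed

lemma coord_act: "h \<in> Hs \<Gamma> \<Longrightarrow> coord (ah a h) = a + coord h"
proof -
  assume h: "h \<in> Hs \<Gamma>"
  have "ah a h = ah a (ah (coord h) (rep (Oh h)))" using coord_prop[OF h] by simp
  also have "\<dots> = ah (a + coord h) (rep (Oh (ah a h)))" using ah_add[OF rep_H[OF h]] orb_act[OF h] by simp
  finally show ?thesis by (rule coord_uniq[OF ah_Hs[OF h]])
qed

lemma coord_rep: "x \<in> Hs og \<Longrightarrow> coord (ah g (rep x)) = g \<and> Oh (ah g (rep x)) = x \<and> ah g (rep x) \<in> Hs \<Gamma>"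
proof -
  assume "x \<in> Hs og"
  then obtain h where h: "h \<in> Hs \<Gamma>" "x = Oh h" using og_Hs by auto
  have r: "rep x \<in> Hs \<Gamma>" "Oh (rep x) = x" using rep_H[OF h(1)] orb_in_eq[OF h(1) rep_O[OF h(1)]] h by auto
  have "coord (rep x) = 0" using coord_uniq[OF r(1), of 0] ah0[OF r(1)] r(2) by simp
  then show ?thesis using coord_act[OF r(1)] orb_act[OF r(1)] r ah_Hs by simp
qed

abbreviation orb_val where "orb_val h \<equiv> val og (orb av (ends \<Gamma> h))"
abbreviation orb_omega where "orb_omega h \<equiv> omega og W (orb av (ends \<Gamma> h))"

lemma omega_sum: "h \<in> Hs \<Gamma> \<Longrightarrow> orb_omega h = (\<Sum>n<orb_val h. W (Oh ((succ \<Gamma> ^^ n) h)))"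
proof -
  assume h: "h \<in> Hs \<Gamma>"
  have "(\<Sum>n<orb_val h. W ((succ og ^^ n) (Oh h))) = (\<Sum>Ob\<in>atv og (orb av (ends \<Gamma> h)). W Ob)"
    by (rule sum.reindex_bij_betw[OF og_cyc(2)[OF h]])
  then show ?thesis unfolding omega_def using succ_O_pow[OF h] by simp
qed

lemma coord_pow: "h \<in> Hs \<Gamma> \<Longrightarrow> coord ((succ \<Gamma> ^^ n) h) = coord h + (\<Sum>i<n. W (Oh ((succ \<Gamma> ^^ i) h)))"
proof (induction n)
  case (Suc n)
  have "(succ \<Gamma> ^^ n) h \<in> Hs \<Gamma>" using funpow_succ_Hs[OF G Suc.prems] by blast
  then show ?case using coord_succ Suc by (simp add: add.assoc)
qed simp

lemma succ_orb_val: "h \<in> Hs \<Gamma> \<Longrightarrow> (succ \<Gamma> ^^ orb_val h) h = ah (orb_omega h) h"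
proof -
  assume h: "h \<in> Hs \<Gamma>"
  let ?y = "(succ \<Gamma> ^^ orb_val h) h"
  have y: "?y \<in> Hs \<Gamma>" using funpow_succ_Hs[OF G h] by blast
  have "Oh ?y = (succ og ^^ orb_val h) (Oh h)" using succ_O_pow[OF h] by simp
  also have "\<dots> = Oh h" using og_cyc(1)[OF h] by simp
  finally have Oy: "Oh ?y = Oh h" .
  have cy: "coord ?y = orb_omega h + coord h"
    using coord_pow[OF h] omega_sum[OF h] by (simp add: add.commute)
  have "?y = ah (coord ?y) (rep (Oh ?y))" by (rule coord_prop[OF y])
  also have "\<dots> = ah (orb_omega h) (ah (coord h) (rep (Oh h)))" unfolding cy Oy using ah_add[OF rep_H[OF h]] by simp
  also have "\<dots> = ah (orb_omega h) h" using coord_prop[OF h] by simp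
  finally show ?thesis .
qed

lemma succ_mult_orb_val: "h \<in> Hs \<Gamma> \<Longrightarrow> (succ \<Gamma> ^^ (j * orb_val h)) h = ah (nsm j (orb_omega h)) h"
proof (induction j)
  case (Suc j)
  have "(succ \<Gamma> ^^ (Suc j * orb_val h)) h = (succ \<Gamma> ^^ orb_val h) ((succ \<Gamma> ^^ (j * orb_val h)) h)"
    by (simp add: funpow_add)
  also have "\<dots> = ah (nsm j (orb_omega h)) (ah (orb_omega h) h)" using Suc succ_pow_act succ_orb_val by simp
  also have "\<dots> = ah (nsm j (orb_omega h) + orb_omega h) h" using ah_add[OF Suc.prems] by simp
  also have "\<dots> = ah (nsm (Suc j) (orb_omega h)) h" by (simp add: nsm_Suc add.commute)
  finally show ?case .
qed (simp add: ah0)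

text \<open>The key count: val nu = val (G nu) * ord (omega), exact by freeness.\<close>
lemma val_eq: "h \<in> Hs \<Gamma> \<Longrightarrow> val \<Gamma> (ends \<Gamma> h) = orb_val h * gord (orb_omega h)"
proof -
  assume h: "h \<in> Hs \<Gamma>"
  let ?N = "val \<Gamma> (ends \<Gamma> h)" and ?o = "gord (orb_omega h)" and ?k = "orb_val h"
  have cyc: "(succ \<Gamma> ^^ n) h = h \<longleftrightarrow> ?N dvd n" for n using bg_cycle(1)[OF G h] by blast
  have "(succ \<Gamma> ^^ (?o * ?k)) h = h" using succ_mult_orb_val[OF h, of ?o] ah0[OF h] gord_props(2)[of "orb_omega h"] by simp
  then have d1: "?N dvd ?k * ?o" using cyc by (simp add: mult.commute)
  have "(succ og ^^ ?N) (Oh h) = Oh h" using cyc[of ?N] succ_O_pow[OF h] by simp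
  then obtain t where t: "?N = ?k * t" using og_cyc(1)[OF h] by blast
  then have "ah (nsm t (orb_omega h)) h = h" using cyc[of "t * ?k"] succ_mult_orb_val[OF h] by (simp add: mult.commute)
  then have "?o dvd t" using ah_fix[OF h] gord_props(3) by blast
  then have "?k * ?o dvd ?N" using t by simp
  then show ?thesis using d1 by (simp add: dvd_antisym)
qed

lemma mult_og: "\<nu> \<in> Vs \<Gamma> \<Longrightarrow> mult og (orb av \<nu>) = gord (omega og W (orb av \<nu>)) * mult \<Gamma> \<nu>"
proof -
  assume v: "\<nu> \<in> Vs \<Gamma>"
  obtain h where h: "h \<in> Hs \<Gamma>" "ends \<Gamma> h = \<nu>" using bg_vertex_has_half[OF G v] by blast
  let ?M = "orb av \<nu>"
  have "(SOME \<mu>. \<mu> \<in> ?M) \<in> ?M" using orbv_self[OF v] by (rule someI)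
  then obtain g where g: "(SOME \<mu>. \<mu> \<in> ?M) = av g \<nu>" by (auto simp: orb_mem)
  have ve: "val \<Gamma> \<nu> = orb_val h * gord (orb_omega h)" using val_eq[OF h(1)] h(2) by simp
  have "0 < val \<Gamma> \<nu>"
    using h bg_fin(1)[OF G] unfolding val_def by (auto simp: card_gt_0_iff atv_def)
  then have kp: "0 < orb_val h" using ve by (cases "orb_val h") auto
  have "mult og ?M = val \<Gamma> \<nu> * mult \<Gamma> \<nu> div orb_val h"
    unfolding og_mult Let_def g val_act[OF v] av_mult[OF v] using h by simp
  also have "\<dots> = gord (orb_omega h) * mult \<Gamma> \<nu>" unfolding ve using kp by simp
  finally show ?thesis using h by simp
qed

lemma brauer_weighting: "brauer_weighting og W"
  unfolding brauer_weighting_def og_Vs using mult_og by auto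

lemma Hsub_stab: "\<nu> \<in> Vs \<Gamma> \<Longrightarrow> g \<in> Hsub og W (orb av \<nu>) \<Longrightarrow> av g \<nu> = \<nu>"
proof -
  assume v: "\<nu> \<in> Vs \<Gamma>" and g: "g \<in> Hsub og W (orb av \<nu>)"
  obtain h where h: "h \<in> Hs \<Gamma>" "ends \<Gamma> h = \<nu>" using bg_vertex_has_half[OF G v] by blast
  have "ends \<Gamma> ((succ \<Gamma> ^^ orb_val h) h) = \<nu>" using funpow_succ_Hs[OF G h(1)] h by simp
  then have om: "av (orb_omega h) \<nu> = \<nu>" using succ_orb_val[OF h(1)] ah_ends[OF h(1)] h by simp
  have "cyc_sub (orb_omega h) \<subseteq> {g. av g \<nu> = \<nu>}"
    by (rule cyc_sub_sub) (use om av0[OF v] av_add[OF v] av_inv[OF v] in \<open>auto, metis\<close>)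
  then show ?thesis using g h unfolding Hsub_def by auto
qed

text \<open>The pair (G h, H_mu coord h) of an occurrence h at nu, whose class is the vertex of
  the cover corresponding to nu.\<close>
definition cpair :: "'h \<Rightarrow> 'h set \<times> 'g set" where
  "cpair h = (Oh h, coset (Hsub og W (orb av (ends \<Gamma> h))) (coord h))"

abbreviation Rsym where "Rsym M \<equiv> crel og W M \<union> (crel og W M)\<inverse>"

lemma coset_shift: "(\<lambda>x. x + w) ` coset S g = coset S (g + w)"
  unfolding coset_def image_image by (simp add: add.assoc)

lemma cpair_cpairs: "h \<in> Hs \<Gamma> \<Longrightarrow> cpair h \<in> cpairs og W (orb av (ends \<Gamma> h))"
  unfolding cpair_def cpairs_def using Oh_in by blast

lemma cpair_step: "h \<in> Hs \<Gamma> \<Longrightarrow> (cpair h, cpair (succ \<Gamma> h)) \<in> crel og W (orb av (ends \<Gamma> h))"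
proof -
  assume h: "h \<in> Hs \<Gamma>"
  have e: "ends \<Gamma> (succ \<Gamma> h) = ends \<Gamma> h" using bg_basic(6)[OF G h] .
  have "cpair (succ \<Gamma> h) =
      (succ og (Oh h), (\<lambda>x. x + W (Oh h)) ` coset (Hsub og W (orb av (ends \<Gamma> h))) (coord h))"
    unfolding cpair_def coset_shift e using succ_O[OF h] coord_succ[OF h] by simp
  then show ?thesis unfolding crel_def using cpair_cpairs[OF h] unfolding cpair_def by blast
qed

lemma cls_eq: "(x, y) \<in> (Rsym M)\<^sup>* \<Longrightarrow> cls og W M x = cls og W M y"
proof -
  assume xy: "(x, y) \<in> (Rsym M)\<^sup>*"
  have "(Rsym M)\<inverse> = Rsym M" by auto
  then have yx: "(y, x) \<in> (Rsym M)\<^sup>*" using xy by (metis rtrancl_converseI)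
  show ?thesis unfolding cls_def using xy yx by (auto intro: rtrancl_trans)
qed

lemma cpair_pow: "h \<in> Hs \<Gamma> \<Longrightarrow> (cpair h, cpair ((succ \<Gamma> ^^ n) h)) \<in> (Rsym (orb av (ends \<Gamma> h)))\<^sup>*"
proof (induction n)
  case (Suc n)
  have y: "(succ \<Gamma> ^^ n) h \<in> Hs \<Gamma>" "ends \<Gamma> ((succ \<Gamma> ^^ n) h) = ends \<Gamma> h"
    using funpow_succ_Hs[OF G Suc.prems] by auto
  have "(cpair ((succ \<Gamma> ^^ n) h), cpair ((succ \<Gamma> ^^ Suc n) h)) \<in> Rsym (orb av (ends \<Gamma> h))"
    using cpair_step[OF y(1)] y(2) by simp
  then show ?case using Suc by (meson rtrancl.rtrancl_into_rtrancl)
qed simp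

lemma cls_vertex: "h \<in> Hs \<Gamma> \<Longrightarrow> h' \<in> Hs \<Gamma> \<Longrightarrow> ends \<Gamma> h' = ends \<Gamma> h \<Longrightarrow>
    cls og W (orb av (ends \<Gamma> h)) (cpair h) = cls og W (orb av (ends \<Gamma> h)) (cpair h')"
proof -
  assume h: "h \<in> Hs \<Gamma>" and h': "h' \<in> Hs \<Gamma>" and e: "ends \<Gamma> h' = ends \<Gamma> h"
  obtain n where "(succ \<Gamma> ^^ n) h = h'" using succ_reaches[OF G h h' e] by blast
  then show ?thesis using cpair_pow[OF h, of n] cls_eq by simp
qed

text \<open>Conversely, the vertex can be recovered from the class: the set of vertices
  g \<cdot> ends (rep O) for g in the coset is invariant under the class relation and equals
  the singleton of the vertex.\<close>
definition shadow :: "'h set \<times> 'g set \<Rightarrow> 'v set" where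
  "shadow x = (\<lambda>g. av g (ends \<Gamma> (rep (fst x)))) ` snd x"

lemma shadow_step: "(x, y) \<in> crel og W M \<Longrightarrow> shadow x = shadow y"
proof -
  assume "(x, y) \<in> crel og W M"
  then obtain Ob C where xy: "x = (Ob, C)" "y = (succ og Ob, (\<lambda>x. x + W Ob) ` C)" "Ob \<in> atv og M"
    unfolding crel_def cpairs_def by blast
  obtain h where h: "h \<in> Hs \<Gamma>" "Ob = Oh h" using atv_og[OF xy(3)] by blast
  have r: "rep Ob \<in> Hs \<Gamma>" using rep_H h by simp
  have r2: "rep (succ og Ob) \<in> Hs \<Gamma>" using rep_H[OF bg_basic(5)[OF G h(1)]] succ_O[OF h(1)] h(2) by simp
  have "ends \<Gamma> (rep Ob) = ends \<Gamma> (succ \<Gamma> (rep Ob))" using bg_basic(6)[OF G r] by simp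
  also have "\<dots> = av (W Ob) (ends \<Gamma> (rep (succ og Ob)))" using W_prop[OF h(1)] h(2) ah_ends[OF r2] by simp
  finally have e: "ends \<Gamma> (rep Ob) = av (W Ob) (ends \<Gamma> (rep (succ og Ob)))" .
  show "shadow x = shadow y" unfolding shadow_def xy fst_conv snd_conv image_image e
    using av_add[OF bg_basic(1)[OF G r2]] by simp
qed

lemma shadow_rtrancl: "(x, y) \<in> (Rsym M)\<^sup>* \<Longrightarrow> shadow x = shadow y"
  by (induction rule: rtrancl_induct) (auto dest: shadow_step)

lemma shadow_cpair: "h \<in> Hs \<Gamma> \<Longrightarrow> shadow (cpair h) = {ends \<Gamma> h}"
proof -
  assume h: "h \<in> Hs \<Gamma>"
  let ?H = "Hsub og W (orb av (ends \<Gamma> h))"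
  have v: "ends \<Gamma> h \<in> Vs \<Gamma>" using bg_basic(1)[OF G h] .
  have r: "rep (Oh h) \<in> Hs \<Gamma>" using rep_H[OF h] .
  have eh: "av (coord h) (ends \<Gamma> (rep (Oh h))) = ends \<Gamma> h"
    using ah_ends[OF r] coord_prop[OF h] by metis
  have "shadow (cpair h) = (\<lambda>s. av s (ends \<Gamma> h)) ` ?H"
    unfolding shadow_def cpair_def fst_conv snd_conv coset_def image_image
    using av_add[OF bg_basic(1)[OF G r]] eh by simp
  also have "\<dots> = {ends \<Gamma> h}"
    using Hsub_stab[OF v] zero_cyc_sub av0[OF v] unfolding Hsub_def by force
  finally show ?thesis .
qed

definition half_at :: "'v \<Rightarrow> 'h" where "half_at \<nu> = (SOME h. h \<in> Hs \<Gamma> \<and> ends \<Gamma> h = \<nu>)"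

lemma half_at: "\<nu> \<in> Vs \<Gamma> \<Longrightarrow> half_at \<nu> \<in> Hs \<Gamma> \<and> ends \<Gamma> (half_at \<nu>) = \<nu>"
  unfolding half_at_def using bg_vertex_has_half[OF G] by (metis (mono_tags, lifting) someI_ex)

definition vmap :: "'v \<Rightarrow> 'v set \<times> ('h set \<times> 'g set) set" where
  "vmap \<nu> = (orb av \<nu>, cls og W (orb av \<nu>) (cpair (half_at \<nu>)))"

definition hmap :: "'h \<Rightarrow> 'h set \<times> 'g" where "hmap h = (Oh h, coord h)"

abbreviation Cov where "Cov \<equiv> cover og W"

lemma Cov_Vs: "Vs Cov = {(M, d) | M d. M \<in> Vs og \<and> d \<in> Dset og W M}"
  and Cov_Hs: "Hs Cov = Hs og \<times> UNIV"
  and Cov_ends: "ends Cov (Ob, g) = (ends og Ob, cls og W (ends og Ob) (Ob, coset (Hsub og W (ends og Ob)) g))"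
  and Cov_opp: "opp Cov (Ob, g) = (opp og Ob, g)"
  and Cov_succ: "succ Cov (Ob, g) = (succ og Ob, g + W Ob)"
  and Cov_mult: "mult Cov (M, d) = mult og M div gord (omega og W M)"
  by (simp_all add: cover_def)

lemma hmap_ends: "h \<in> Hs \<Gamma> \<Longrightarrow> ends Cov (hmap h) = vmap (ends \<Gamma> h)"
proof -
  assume h: "h \<in> Hs \<Gamma>"
  have "ends Cov (hmap h) = (orb av (ends \<Gamma> h), cls og W (orb av (ends \<Gamma> h)) (cpair h))"
    unfolding hmap_def Cov_ends ends_O[OF h] cpair_def ..
  also have "\<dots> = vmap (ends \<Gamma> h)"
    unfolding vmap_def using cls_vertex[OF h] half_at[OF bg_basic(1)[OF G h]] by simp
  finally show ?thesis .
qed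

lemma hmap_opp: "h \<in> Hs \<Gamma> \<Longrightarrow> opp Cov (hmap h) = hmap (opp \<Gamma> h)"
  unfolding hmap_def Cov_opp using opp_O coord_opp by simp

lemma hmap_succ: "h \<in> Hs \<Gamma> \<Longrightarrow> succ Cov (hmap h) = hmap (succ \<Gamma> h)"
  unfolding hmap_def Cov_succ using succ_O coord_succ by simp

lemma hmap_bij: "bij_betw hmap (Hs \<Gamma>) (Hs Cov)"
proof (rule bij_betw_imageI)
  show "inj_on hmap (Hs \<Gamma>)"
    by (rule inj_onI) (metis coord_prop hmap_def prod.inject)
  show "hmap ` Hs \<Gamma> = Hs Cov"
  proof
    show "hmap ` Hs \<Gamma> \<subseteq> Hs Cov" unfolding Cov_Hs hmap_def og_Hs by auto
    show "Hs Cov \<subseteq> hmap ` Hs \<Gamma>"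
    proof
      fix z assume "z \<in> Hs Cov"
      then obtain Ob g where z: "z = (Ob, g)" "Ob \<in> Hs og" unfolding Cov_Hs by auto
      then show "z \<in> hmap ` Hs \<Gamma>" using coord_rep[OF z(2)] by (force simp: hmap_def)
    qed
  qed
qed

lemma vmap_mult: "\<nu> \<in> Vs \<Gamma> \<Longrightarrow> mult Cov (vmap \<nu>) = mult \<Gamma> \<nu>"
  unfolding vmap_def Cov_mult using mult_og gord_props(1)[of "omega og W (orb av \<nu>)"] by simp

lemma vmap_inj: "inj_on vmap (Vs \<Gamma>)"
proof (rule inj_onI)
  fix x y assume x: "x \<in> Vs \<Gamma>" and y: "y \<in> Vs \<Gamma>" and e: "vmap x = vmap y"
  then have "cls og W (orb av x) (cpair (half_at x)) = cls og W (orb av x) (cpair (half_at y))"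
    unfolding vmap_def by auto
  moreover have "cpair (half_at y) \<in> cls og W (orb av x) (cpair (half_at y))" unfolding cls_def by simp
  ultimately have "(cpair (half_at x), cpair (half_at y)) \<in> (Rsym (orb av x))\<^sup>*" unfolding cls_def by blast
  then have "shadow (cpair (half_at x)) = shadow (cpair (half_at y))" by (rule shadow_rtrancl)
  then show "x = y" using shadow_cpair half_at[OF x] half_at[OF y] by simp
qed

lemma vmap_onto: "vmap ` Vs \<Gamma> = Vs Cov"
proof
  show "vmap ` Vs \<Gamma> \<subseteq> Vs Cov"
  proof
    fix z assume "z \<in> vmap ` Vs \<Gamma>"
    then obtain \<nu> where v: "\<nu> \<in> Vs \<Gamma>" "z = vmap \<nu>" by blast
    have "cpair (half_at \<nu>) \<in> cpairs og W (orb av \<nu>)" using cpair_cpairs half_at[OF v(1)] by metis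
    then have "cls og W (orb av \<nu>) (cpair (half_at \<nu>)) \<in> Dset og W (orb av \<nu>)" unfolding Dset_def by blast
    moreover have "orb av \<nu> \<in> Vs og" using v og_Vs by simp
    ultimately show "z \<in> Vs Cov" unfolding Cov_Vs v(2) vmap_def by blast
  qed
  show "Vs Cov \<subseteq> vmap ` Vs \<Gamma>"
  proof
    fix z assume "z \<in> Vs Cov"
    then obtain M d where z: "z = (M, d)" "d \<in> Dset og W M" unfolding Cov_Vs by blast
    then obtain Ob g where d: "d = cls og W M (Ob, coset (Hsub og W M) g)" "Ob \<in> atv og M"
      unfolding Dset_def cpairs_def by blast
    let ?y = "ah g (rep Ob)"
    have y: "coord ?y = g" "Oh ?y = Ob" "?y \<in> Hs \<Gamma>" using coord_rep d(2) by (auto simp: atv_def)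
    let ?\<nu> = "ends \<Gamma> ?y"
    have v: "?\<nu> \<in> Vs \<Gamma>" using bg_basic(1)[OF G y(3)] .
    have M: "orb av ?\<nu> = M" using ends_O[OF y(3)] y(2) d(2) by (simp add: atv_def)
    have "cpair ?y = (Ob, coset (Hsub og W M) g)" unfolding cpair_def using y M by simp
    moreover have "cls og W M (cpair ?y) = cls og W M (cpair (half_at ?\<nu>))"
      using cls_vertex[OF y(3), of "half_at ?\<nu>"] half_at[OF v] M by simp
    ultimately have "vmap ?\<nu> = z" unfolding vmap_def M d(1) z(1) by simp
    then show "z \<in> vmap ` Vs \<Gamma>" using v by blast
  qed
qed

lemma iso: "bgiso \<Gamma> Cov vmap hmap"
  unfolding bgiso_def bij_betw_def
  using vmap_inj vmap_onto hmap_bij[unfolded bij_betw_def] hmap_ends hmap_opp hmap_succ vmap_mult by blast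

lemma nontrunc_opp: "h \<in> Hs \<Gamma> \<Longrightarrow> nontrunc_edge \<Gamma> h \<Longrightarrow> nontrunc_edge \<Gamma> (opp \<Gamma> h)"
  unfolding nontrunc_edge_def using bg_basic(4)[OF G] by auto

lemma qbar_O:
  assumes q: "is_qbgraph \<Gamma> q" and qa: "q_action \<Gamma> ah q" and e1: "valid_E1 \<Gamma> ah E1"
    and h: "h \<in> Hs \<Gamma>" and nt: "nontrunc_edge \<Gamma> h"
  shows "qbar q E1 (Oh h) = q h / q (E1 h)"
proof -
  obtain a where a: "(SOME x. x \<in> Oh h) = ah a h" using some_O[OF h] by blast
  have E: "E1 (ah a h) = ah a (E1 h)" "E1 h \<in> edge \<Gamma> h" using e1 h nt by (auto simp: valid_E1_def)
  have nz: "q h \<noteq> 0" "q (opp \<Gamma> h) \<noteq> 0"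
    using q h nt nontrunc_opp[OF h nt] bg_basic(2)[OF G h] by (auto simp: is_qbgraph_def)
  have qq: "q h / q (opp \<Gamma> h) = q (ah a h) / q (ah a (opp \<Gamma> h))" using qa h nt by (simp add: q_action_def)
  have "qbar q E1 (Oh h) = q (ah a h) / q (ah a (E1 h))" unfolding qbar_def Let_def a E(1) ..
  also have "\<dots> = q h / q (E1 h)"
  proof (cases "E1 h = h")
    case True then show ?thesis using nz qq by (auto simp: field_simps)
  next
    case False
    then have "E1 h = opp \<Gamma> h" using E(2) by (simp add: edge_def)
    then show ?thesis using qq by simp
  qed
  finally show ?thesis .
qed

lemma qcover_compat:
  assumes q: "is_qbgraph \<Gamma> q" and qa: "q_action \<Gamma> ah q" and e1: "valid_E1 \<Gamma> ah E1"
  shows "bgraph_iso.q_compat \<Gamma> hmap q (qcover (qbar q E1))"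
  unfolding bgraph_iso.q_compat_def[OF bgraph_iso.intro[OF G iso]]
proof (intro ballI impI)
  fix h assume h: "h \<in> Hs \<Gamma>" and nt: "nontrunc_edge \<Gamma> h"
  have oh: "opp \<Gamma> h \<in> Hs \<Gamma>" and nt': "nontrunc_edge \<Gamma> (opp \<Gamma> h)"
    using bg_basic(2)[OF G h] nontrunc_opp[OF h nt] by auto
  have E: "E1 h \<in> edge \<Gamma> h" "E1 (opp \<Gamma> h) = E1 h" using e1 h nt by (auto simp: valid_E1_def)
  have nz: "q h \<noteq> 0" "q (opp \<Gamma> h) \<noteq> 0" using q h nt nt' oh by (auto simp: is_qbgraph_def)
  have nzE: "q (E1 h) \<noteq> 0" using E(1) nz by (auto simp: edge_def)
  have 1: "qcover (qbar q E1) (hmap h) = q h / q (E1 h)"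
    unfolding hmap_def qcover_def using qbar_O[OF q qa e1 h nt] by simp
  have 2: "qcover (qbar q E1) (hmap (opp \<Gamma> h)) = q (opp \<Gamma> h) / q (E1 h)"
    unfolding hmap_def qcover_def using qbar_O[OF q qa e1 oh nt'] E(2) by simp
  show "q h \<noteq> 0 \<and> qcover (qbar q E1) (hmap h) \<noteq> 0 \<and>
      qcover (qbar q E1) (hmap h) * q (opp \<Gamma> h) = qcover (qbar q E1) (hmap (opp \<Gamma> h)) * q h"
    unfolding 1 2 using nz nzE by simp
qed

end

theorem theorem5p3:
  fixes \<Gamma> :: "('v, 'h) bgraph"
    and av :: "'g::{finite, ab_group_add} \<Rightarrow> 'v \<Rightarrow> 'v"
    and ah :: "'g \<Rightarrow> 'h \<Rightarrow> 'h"
    and rep :: "'h set \<Rightarrow> 'h"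
  assumes "is_bgraph \<Gamma>"
    and "free_brauer_action \<Gamma> av ah"
    and "valid_rep \<Gamma> av ah rep"
  shows "brauer_weighting (orbit_graph \<Gamma> av ah) (assoc_weighting \<Gamma> av ah rep)
       \<and> (\<exists>fv fh. bgiso \<Gamma> (cover (orbit_graph \<Gamma> av ah) (assoc_weighting \<Gamma> av ah rep)) fv fh)
       \<and> (\<forall>(q :: 'h \<Rightarrow> 'k::field) E1.
            is_qbgraph \<Gamma> q \<and> q_action \<Gamma> ah q \<and> valid_E1 \<Gamma> ah E1 \<longrightarrow>
            (\<exists>fv fh. qiso \<Gamma> q
                       (cover (orbit_graph \<Gamma> av ah) (assoc_weighting \<Gamma> av ah rep))
                       (qcover (qbar q E1)) fv fh))"
proof -
  interpret free_action \<Gamma> av ah rep using assms by unfold_locales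
  have "qiso \<Gamma> q Cov (qcover (qbar q E1)) vmap hmap"
    if "is_qbgraph \<Gamma> q" "q_action \<Gamma> ah q" "valid_E1 \<Gamma> ah E1" for q :: "'h \<Rightarrow> 'k" and E1
    using qiso_transport[OF G iso qcover_compat[OF that]] .
  then show ?thesis using brauer_weighting iso by blast
qed

end
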